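(* Let $N\ge 2$, let $\Omega\subset\mathbb{R}^N$ be a bounded domain with smooth boundary, let $g\in C^\infty(\overline{\Omega})$ be positive, and let $A,B,p,q$ be positive constants, all independent of $\epsilon$, with $(A-B)(p-q)\ge0$ and $A\neq B$. For $\epsilon>0$ let $u_\epsilon$ be the unique solution of problem (N) described in the context. Then $$1\le \frac{1}{|\Omega|}\int_\Omega e^{pu_\epsilon}\,dx\le\max\Big\{\frac AB,\Big(\frac BA\Big)^{p/q}\Big\},\qquad 1\le \frac{1}{|\Omega|}\int_\Omega e^{-qu_\epsilon}\,dx\le\max\Big\{\frac BA,\Big(\frac AB\Big)^{q/p}\Big\}.$$
   Context: Problem (N): for $\epsilon>0$, find $u_\epsilon\in C^\infty(\Omega)\cap C^1(\overline{\Omega})$ with $$\epsilon^2\nabla\cdot(g\nabla u_\epsilon)=\frac{Ae^{pu_\epsilon}}{\frac{1}{|\Omega|}\int_\Omega e^{pu_\epsilon(y)}dy}-\frac{Be^{-qu_\epsilon}}{\frac{1}{|\Omega|}\int_\Omega e^{-qu_\epsilon(y)}dy}\ \text{ in }\Omega,\qquad \epsilon^2\partial_\nu u_\epsilon=C_{bd}\ \text{ on }\partial\Omega,\qquad \int_\Omega u_\epsilon\,dx=0,$$ where $\partial_\nu$ is the outward normal derivative, $|\Omega|$ the Lebesgue measure of $\Omega$, and $C_{bd}=\frac{|\Omega|(A-B)}{\int_{\partial\Omega} g\,dS_x}$; this solution exists and is unique. *)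

theory Defs
  imports "HOL-Analysis.Analysis"
begin

definition partial :: "'n::finite \<Rightarrow> (real^'n \<Rightarrow> real) \<Rightarrow> real^'n \<Rightarrow> real" where
  "partial i f x = deriv (\<lambda>t. f (x + t *\<^sub>R axis i 1)) 0"

definition grad :: "(real^'n::finite \<Rightarrow> real) \<Rightarrow> real^'n \<Rightarrow> real^'n" where
  "grad f x = (\<chi> i. partial i f x)"

definition divergence :: "(real^'n::finite \<Rightarrow> real^'n) \<Rightarrow> real^'n \<Rightarrow> real" where
  "divergence F x = (\<Sum>i\<in>UNIV. partial i (\<lambda>y. F y $ i) x)"

fun Ck_on :: "nat \<Rightarrow> (real^'n::finite \<Rightarrow> real) \<Rightarrow> (real^'n) set \<Rightarrow> bool" where
  "Ck_on 0 f U = continuous_on U f"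
| "Ck_on (Suc k) f U = (continuous_on U f \<and> (\<forall>x\<in>U. f differentiable (at x))
      \<and> (\<forall>i. Ck_on k (partial i f) U))"

definition smooth_on :: "(real^'n::finite \<Rightarrow> real) \<Rightarrow> (real^'n) set \<Rightarrow> bool" where
  "smooth_on f U \<longleftrightarrow> (\<forall>k. Ck_on k f U)"

definition smooth_bounded_domain :: "(real^'n::finite) set \<Rightarrow> (real^'n \<Rightarrow> real) \<Rightarrow> bool" where
  "smooth_bounded_domain \<Omega> \<phi> \<longleftrightarrow>
     \<Omega> = {x. \<phi> x < 0} \<and> \<Omega> \<noteq> {} \<and> bounded \<Omega> \<and> connected \<Omega> \<and>
     smooth_on \<phi> UNIV \<and> (\<forall>x. \<phi> x = 0 \<longrightarrow> grad \<phi> x \<noteq> 0)"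

definition outward_normal :: "(real^'n::finite \<Rightarrow> real) \<Rightarrow> real^'n \<Rightarrow> real^'n" where
  "outward_normal \<phi> x = grad \<phi> x /\<^sub>R norm (grad \<phi> x)"

text \<open>Surface integral over the boundary {phi = 0} w.r.t. the surface measure dS,
  via the coarea formula: int_{dOmega} f dS = lim_{delta->0+} 1/delta int_{-delta<phi<=0} f |grad phi| dx.\<close>
definition boundary_integral :: "(real^'n::finite \<Rightarrow> real) \<Rightarrow> (real^'n \<Rightarrow> real) \<Rightarrow> real" where
  "boundary_integral \<phi> f = Lim (at_right 0)
     (\<lambda>\<delta>. (1 / \<delta>) * (LINT x:{x. - \<delta> < \<phi> x \<and> \<phi> x \<le> 0}|lebesgue. f x * norm (grad \<phi> x)))"

definition mean :: "(real^'n::finite) set \<Rightarrow> (real^'n \<Rightarrow> real) \<Rightarrow> real" where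
  "mean \<Omega> f = (LINT x:\<Omega>|lebesgue. f x) / measure lebesgue \<Omega>"

text \<open>u solves problem (N) with parameters eps, g, A, B, p, q on the domain (Omega, phi):
  u in C^infty(Omega) cap C^1(closure Omega) (Du is the continuous extension of the gradient
  to the closure), the PDE holds in Omega, the Neumann condition on the boundary, zero mean.\<close>
definition solves_N ::
  "(real^'n::finite) set \<Rightarrow> (real^'n \<Rightarrow> real) \<Rightarrow> (real^'n \<Rightarrow> real) \<Rightarrow> real \<Rightarrow> real \<Rightarrow> real
    \<Rightarrow> real \<Rightarrow> real \<Rightarrow> (real^'n \<Rightarrow> real) \<Rightarrow> bool" where
  "solves_N \<Omega> \<phi> g A B p q \<epsilon> u \<longleftrightarrow>
     smooth_on u \<Omega> \<and> continuous_on (closure \<Omega>) u \<and>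
     (\<exists>Du. continuous_on (closure \<Omega>) Du \<and>
           (\<forall>x\<in>\<Omega>. (u has_derivative (\<lambda>h. Du x \<bullet> h)) (at x)) \<and>
           (\<forall>x\<in>frontier \<Omega>. \<epsilon>\<^sup>2 * (Du x \<bullet> outward_normal \<phi> x) =
               measure lebesgue \<Omega> * (A - B) / boundary_integral \<phi> g)) \<and>
     (\<forall>x\<in>\<Omega>. \<epsilon>\<^sup>2 * divergence (\<lambda>y. g y *\<^sub>R grad u y) x =
         A * exp (p * u x) / mean \<Omega> (\<lambda>y. exp (p * u y))
       - B * exp (- q * u x) / mean \<Omega> (\<lambda>y. exp (- q * u y))) \<and>
     (LINT x:\<Omega>|lebesgue. u x) = 0"

end

(* Let a and b be the means of exp (p u) and exp (- q u). Since u has zero mean, Jensen's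
   inequality gives a, b >= 1. Suppose A > B (the case A < B is symmetric, with a maximum in place
   of a minimum). The boundary integral of g is positive, so the Neumann datum is positive; hence
   u cannot attain its minimum over the closure on the boundary, where the outward normal
   derivative would be nonpositive. At an interior minimum m <= 0 the divergence term is
   nonnegative, so A exp (p m) / a >= B exp (- q m) / b; together with b <= exp (- q m) this gives
   a <= A / B and b <= (A / B) powr (q / p).
   The boundary integral is defined through thin layers below the boundary; its positivity is
   proved by flattening the boundary with local charts and a partition of unity, which turns the
   normalised layer integrals into integrals over slabs whose limits can be computed. *)

theory Submission
  imports Defs
begin

lemma partial_eq_derivative_axis:
  assumes "(f has_derivative D) (at x)"
  shows "partial i f x = D (axis i 1)"
proof -
  have "((\<lambda>t. x + t *\<^sub>R axis i 1) has_derivative (\<lambda>t. t *\<^sub>R axis i 1)) (at 0)"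
    by (auto intro!: derivative_eq_intros)
  moreover have "(f has_derivative D) (at (x + 0 *\<^sub>R axis i 1))"
    using assms by simp
  ultimately have "((\<lambda>t. f (x + t *\<^sub>R axis i 1)) has_derivative (\<lambda>t. D (t *\<^sub>R axis i 1))) (at 0)"
    by (rule has_derivative_compose)
  moreover have "(\<lambda>t. D (t *\<^sub>R axis i 1)) = (*) (D (axis i 1))"
    using has_derivative_linear[OF assms] by (auto simp: linear_scale fun_eq_iff)
  ultimately have "((\<lambda>t. f (x + t *\<^sub>R axis i 1)) has_real_derivative D (axis i 1)) (at 0)"
    by (simp add: has_field_derivative_def)
  then show ?thesis
    unfolding partial_def by (rule DERIV_imp_deriv)
qed

lemma has_derivative_grad:
  assumes "f differentiable (at x)"
  shows "(f has_derivative (\<lambda>h. grad f x \<bullet> h)) (at x)"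
proof -
  obtain D where D: "(f has_derivative D) (at x)"
    using assms differentiable_def by blast
  have "D h = grad f x \<bullet> h" for h
  proof -
    have "D h = D (\<Sum>i\<in>UNIV. h $ i *\<^sub>R axis i 1)"
      by (metis (no_types) basis_expansion scalar_mult_eq_scaleR sum.cong)
    also have "\<dots> = (\<Sum>i\<in>UNIV. h $ i * D (axis i 1))"
      using has_derivative_linear[OF D] by (simp add: linear_sum linear_scale)
    also have "\<dots> = grad f x \<bullet> h"
      by (simp add: inner_vec_def grad_def partial_eq_derivative_axis[OF D] mult.commute)
    finally show ?thesis .
  qed
  then have "D = (\<lambda>h. grad f x \<bullet> h)"
    by auto
  then show ?thesis
    using D by simp
qed

lemma has_real_derivative_partial:
  assumes "f differentiable (at (x + t *\<^sub>R axis i 1))"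
  shows "((\<lambda>s. f (x + s *\<^sub>R axis i 1)) has_real_derivative partial i f (x + t *\<^sub>R axis i 1)) (at t)"
proof -
  let ?y = "x + t *\<^sub>R axis i 1"
  have "((\<lambda>s. x + s *\<^sub>R axis i 1) has_derivative (\<lambda>s. s *\<^sub>R axis i 1)) (at t)"
    by (auto intro!: derivative_eq_intros)
  from has_derivative_compose[OF this has_derivative_grad[OF assms]]
  have "((\<lambda>s. f (x + s *\<^sub>R axis i 1)) has_derivative (\<lambda>s. grad f ?y \<bullet> (s *\<^sub>R axis i 1))) (at t)" .
  moreover have "(\<lambda>s. grad f ?y \<bullet> (s *\<^sub>R axis i 1)) = (*) (partial i f ?y)"
    by (auto simp: fun_eq_iff grad_def inner_axis)
  ultimately show ?thesis
    by (simp add: has_field_derivative_def)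
qed

lemma smooth_onD:
  assumes "smooth_on f U"
  shows "continuous_on U f" "\<And>x. x \<in> U \<Longrightarrow> f differentiable (at x)"
    "\<And>i. continuous_on U (partial i f)" "\<And>i x. x \<in> U \<Longrightarrow> partial i f differentiable (at x)"
proof -
  have "Ck_on 2 f U"
    using assms smooth_on_def by blast
  then show "continuous_on U f" "\<And>x. x \<in> U \<Longrightarrow> f differentiable (at x)"
    "\<And>i. continuous_on U (partial i f)" "\<And>i x. x \<in> U \<Longrightarrow> partial i f differentiable (at x)"
    by (simp_all add: numeral_2_eq_2)
qed

section \<open>Maximum principle\<close>

lemma local_min_imp_second_derivative_nonneg:
  fixes h P :: "real \<Rightarrow> real"
  assumes "d > 0"
    and h_deriv: "\<And>t. \<bar>t\<bar> < d \<Longrightarrow> (h has_real_derivative P t) (at t)"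
    and h_min: "\<And>t. \<bar>t\<bar> < d \<Longrightarrow> h 0 \<le> h t"
    and P_deriv: "(P has_real_derivative D) (at 0)"
  shows "P 0 = 0" "D \<ge> 0"
proof -
  show P0: "P 0 = 0"
    using DERIV_local_min[OF h_deriv[of 0] \<open>d > 0\<close>] h_min \<open>d > 0\<close> by auto
  show "D \<ge> 0"
  proof (rule ccontr)
    assume "\<not> D \<ge> 0"
    then obtain d1 where "d1 > 0" and P_neg: "\<And>t. 0 < t \<Longrightarrow> t < d1 \<Longrightarrow> P t < 0"
      using DERIV_neg_dec_right[OF P_deriv] P0 by force
    define t where "t = min d1 d / 2"
    have t: "0 < t" "t < d1" "t < d"
      using \<open>d > 0\<close> \<open>d1 > 0\<close> by (auto simp: t_def)
    obtain z where z: "0 < z" "z < t" "h t - h 0 = (t - 0) * P z"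
      using MVT2[of 0 t h P] t h_deriv by force
    have "t * P z < 0"
      using mult_pos_neg[OF t(1) P_neg[of z]] z t by linarith
    then show False
      using z(3) h_min[of t] t by simp
  qed
qed

lemma divergence_sign_at_interior_min:
  fixes u g :: "real^'n::finite \<Rightarrow> real"
  assumes "open \<Omega>" "smooth_on u \<Omega>" "x0 \<in> \<Omega>"
    and min: "\<And>y. y \<in> \<Omega> \<Longrightarrow> s * u x0 \<le> s * u y"
    and "g differentiable (at x0)" "g x0 \<ge> 0"
  shows "s * divergence (\<lambda>y. g y *\<^sub>R grad u y) x0 \<ge> 0"
proof (cases "s = 0")
  case False
  obtain d where "d > 0" "ball x0 d \<subseteq> \<Omega>"
    using assms(1,3) open_contains_ball by blast
  note u = smooth_onD[OF assms(2)]
  have on_axis: "x0 + t *\<^sub>R axis i 1 \<in> \<Omega>" if "\<bar>t\<bar> < d" for t i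
    using \<open>ball x0 d \<subseteq> \<Omega>\<close> that by (auto simp: dist_norm)
  have "s * partial i (\<lambda>y. (g y *\<^sub>R grad u y) $ i) x0 \<ge> 0" for i
  proof -
    define P where "P t = partial i u (x0 + t *\<^sub>R axis i 1)" for t
    define G where "G t = g (x0 + t *\<^sub>R axis i 1)" for t
    have h_deriv: "((\<lambda>t. s * u (x0 + t *\<^sub>R axis i 1)) has_real_derivative s * P t) (at t)" if "\<bar>t\<bar> < d" for t
      unfolding P_def
      by (intro DERIV_cmult has_real_derivative_partial u(2) on_axis that)
    have h_min: "s * u (x0 + 0 *\<^sub>R axis i 1) \<le> s * u (x0 + t *\<^sub>R axis i 1)" if "\<bar>t\<bar> < d" for t
      using min on_axis that by simp
    have P_deriv: "(P has_real_derivative partial i (partial i u) x0) (at 0)"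
      unfolding P_def using has_real_derivative_partial[of "partial i u" x0 0 i] u(4)[OF assms(3)] by simp
    note second_derivative_test =
      local_min_imp_second_derivative_nonneg[OF \<open>d > 0\<close> h_deriv h_min DERIV_cmult[OF P_deriv]]
    have "P 0 = 0"
      using second_derivative_test(1) False by simp
    have uii: "s * partial i (partial i u) x0 \<ge> 0"
      using second_derivative_test(2) by simp
    have "(G has_real_derivative partial i g x0) (at 0)"
      unfolding G_def using has_real_derivative_partial[of g x0 0 i] assms(5) by simp
    from DERIV_mult[OF this P_deriv]
    have "((\<lambda>t. G t * P t) has_real_derivative g x0 * partial i (partial i u) x0) (at 0)"
      using \<open>P 0 = 0\<close> by (simp add: G_def mult.commute)
    moreover have "partial i (\<lambda>y. (g y *\<^sub>R grad u y) $ i) x0 = deriv (\<lambda>t. G t * P t) 0"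
      by (simp add: partial_def G_def P_def grad_def)
    ultimately have "partial i (\<lambda>y. (g y *\<^sub>R grad u y) $ i) x0 = g x0 * partial i (partial i u) x0"
      using DERIV_imp_deriv by metis
    then show ?thesis
      using uii assms(6) by (metis mult.left_commute mult_nonneg_nonneg)
  qed
  then show ?thesis
    by (simp add: divergence_def sum_distrib_left sum_nonneg)
qed simp

section \<open>Domains with smooth boundary\<close>

lemma smooth_bounded_domainD:
  assumes "smooth_bounded_domain \<Omega> \<phi>"
  shows "\<Omega> = {x. \<phi> x < 0}" "open \<Omega>" "bounded \<Omega>" "\<Omega> \<noteq> {}"
    "continuous_on UNIV \<phi>" "continuous_on UNIV (grad \<phi>)"
    "\<And>x. (\<phi> has_derivative (\<lambda>h. grad \<phi> x \<bullet> h)) (at x)"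
    "\<And>x. \<phi> x = 0 \<Longrightarrow> grad \<phi> x \<noteq> 0"
proof -
  have \<phi>: "smooth_on \<phi> UNIV"
    using assms by (simp add: smooth_bounded_domain_def)
  show "continuous_on UNIV \<phi>"
    using smooth_onD(1)[OF \<phi>] .
  show "(\<phi> has_derivative (\<lambda>h. grad \<phi> x \<bullet> h)) (at x)" for x
    by (rule has_derivative_grad[OF smooth_onD(2)[OF \<phi>]]) simp
  show "continuous_on UNIV (grad \<phi>)"
    unfolding grad_def by (intro continuous_on_vec_lambda smooth_onD(3)[OF \<phi>])
  show "\<Omega> = {x. \<phi> x < 0}" "bounded \<Omega>" "\<Omega> \<noteq> {}" "\<And>x. \<phi> x = 0 \<Longrightarrow> grad \<phi> x \<noteq> 0"
    using assms by (auto simp: smooth_bounded_domain_def)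
  then show "open \<Omega>"
    using smooth_onD(1)[OF \<phi>] open_Collect_less[of \<phi> "\<lambda>_. 0"]
    by (simp add: continuous_on_eq_continuous_at)
qed

lemma inner_grad_outward_normal:
  assumes "grad \<phi> x \<noteq> 0"
  shows "grad \<phi> x \<bullet> outward_normal \<phi> x = norm (grad \<phi> x)"
  using assms by (simp add: outward_normal_def divide_inverse_commute dot_square_norm power2_eq_square)

lemma inward_normal_enters_domain:
  assumes "smooth_bounded_domain \<Omega> \<phi>" "\<phi> x0 = 0"
  obtains d where "d > 0" "\<And>t. 0 < t \<Longrightarrow> t < d \<Longrightarrow> x0 - t *\<^sub>R outward_normal \<phi> x0 \<in> \<Omega>"
proof -
  note \<Omega> = smooth_bounded_domainD[OF assms(1)]
  let ?n = "outward_normal \<phi> x0"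
  have "grad \<phi> x0 \<noteq> 0"
    using \<Omega>(8) assms(2) .
  have "((\<lambda>t. x0 - t *\<^sub>R ?n) has_derivative (\<lambda>t. - (t *\<^sub>R ?n))) (at 0)"
    by (auto intro!: derivative_eq_intros)
  moreover have "(\<phi> has_derivative (\<lambda>h. grad \<phi> x0 \<bullet> h)) (at (x0 - 0 *\<^sub>R ?n))"
    using \<Omega>(7)[of x0] by simp
  ultimately have "((\<lambda>t. \<phi> (x0 - t *\<^sub>R ?n)) has_derivative (\<lambda>t. grad \<phi> x0 \<bullet> (- (t *\<^sub>R ?n)))) (at 0)"
    by (rule has_derivative_compose)
  moreover have "(\<lambda>t. grad \<phi> x0 \<bullet> (- (t *\<^sub>R ?n))) = (*) (- norm (grad \<phi> x0))"
    using inner_grad_outward_normal[OF \<open>grad \<phi> x0 \<noteq> 0\<close>] by (auto simp: fun_eq_iff)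
  ultimately have "((\<lambda>t. \<phi> (x0 - t *\<^sub>R ?n)) has_real_derivative - norm (grad \<phi> x0)) (at 0)"
    by (simp add: has_field_derivative_def)
  from DERIV_neg_dec_right[OF this] obtain d
    where "d > 0" "\<And>t. t > 0 \<Longrightarrow> t < d \<Longrightarrow> \<phi> (x0 - t *\<^sub>R ?n) < \<phi> x0"
    using \<open>grad \<phi> x0 \<noteq> 0\<close> by force
  then show ?thesis
    using that assms(2) \<Omega>(1) by auto
qed

lemma smooth_bounded_domain_closure:
  assumes "smooth_bounded_domain \<Omega> \<phi>"
  shows "closure \<Omega> = {x. \<phi> x \<le> 0}"
proof
  note \<Omega> = smooth_bounded_domainD[OF assms]
  show "closure \<Omega> \<subseteq> {x. \<phi> x \<le> 0}"
    using \<Omega>(1,5) closed_Collect_le[of \<phi> "\<lambda>_. 0"]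
    by (intro closure_minimal) (auto simp: continuous_on_eq_continuous_at)
  show "{x. \<phi> x \<le> 0} \<subseteq> closure \<Omega>"
  proof
    fix x0 assume "x0 \<in> {x. \<phi> x \<le> 0}"
    show "x0 \<in> closure \<Omega>"
    proof (cases "\<phi> x0 = 0")
      case True
      obtain d where "d > 0" and inside: "\<And>t. 0 < t \<Longrightarrow> t < d \<Longrightarrow> x0 - t *\<^sub>R outward_normal \<phi> x0 \<in> \<Omega>"
        using inward_normal_enters_domain[OF assms True] by blast
      have "norm (outward_normal \<phi> x0) = 1"
        using \<Omega>(8)[OF True] by (simp add: outward_normal_def)
      have "\<exists>y\<in>\<Omega>. dist y x0 < e" if "e > 0" for e
        using inside[of "min d e / 2"] \<open>d > 0\<close> that \<open>norm (outward_normal \<phi> x0) = 1\<close>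
        by (intro bexI[of _ "x0 - (min d e / 2) *\<^sub>R outward_normal \<phi> x0"]) (auto simp: dist_norm)
      then show ?thesis
        unfolding closure_approachable by blast
    next
      case False
      then show ?thesis
        using \<open>x0 \<in> {x. \<phi> x \<le> 0}\<close> \<Omega>(1) closure_subset by fastforce
    qed
  qed
qed

lemma smooth_bounded_domain_frontier:
  assumes "smooth_bounded_domain \<Omega> \<phi>"
  shows "frontier \<Omega> = {x. \<phi> x = 0}"
  using smooth_bounded_domain_closure[OF assms] smooth_bounded_domainD(1,2)[OF assms]
  by (auto simp: frontier_def interior_open)

lemma normal_derivative_sign_at_boundary_min:
  fixes u :: "real^'n::finite \<Rightarrow> real"
  assumes \<Omega>: "smooth_bounded_domain \<Omega> \<phi>" and "x0 \<in> frontier \<Omega>"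
    and u: "continuous_on (closure \<Omega>) u" and Du: "continuous_on (closure \<Omega>) Du"
    and u_deriv: "\<And>x. x \<in> \<Omega> \<Longrightarrow> (u has_derivative (\<lambda>h. Du x \<bullet> h)) (at x)"
    and min: "\<And>y. y \<in> closure \<Omega> \<Longrightarrow> s * u x0 \<le> s * u y"
  shows "s * (Du x0 \<bullet> outward_normal \<phi> x0) \<le> 0"
proof (rule ccontr)
  let ?n = "outward_normal \<phi> x0"
  let ?x = "\<lambda>t. x0 - t *\<^sub>R ?n"
  assume "\<not> ?thesis"
  then have pos: "s * (Du x0 \<bullet> ?n) > 0"
    by simp
  have "\<phi> x0 = 0"
    using assms(2) smooth_bounded_domain_frontier[OF \<Omega>] by auto
  have "norm ?n = 1"
    using smooth_bounded_domainD(8)[OF \<Omega> \<open>\<phi> x0 = 0\<close>] by (simp add: outward_normal_def)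
  have "x0 \<in> closure \<Omega>"
    using assms(2) by (auto simp: frontier_def)
  have "continuous_on (closure \<Omega>) (\<lambda>y. s * (Du y \<bullet> ?n))"
    by (intro continuous_intros Du)
  then obtain e where "e > 0"
    and e: "\<And>y. y \<in> closure \<Omega> \<Longrightarrow> dist y x0 < e \<Longrightarrow> dist (s * (Du y \<bullet> ?n)) (s * (Du x0 \<bullet> ?n)) < s * (Du x0 \<bullet> ?n)"
    using \<open>x0 \<in> closure \<Omega>\<close> pos unfolding continuous_on_iff by meson
  obtain d where "d > 0" and inside: "\<And>t. 0 < t \<Longrightarrow> t < d \<Longrightarrow> ?x t \<in> \<Omega>"
    using inward_normal_enters_domain[OF \<Omega> \<open>\<phi> x0 = 0\<close>] by blast
  define t1 where "t1 = min d e / 2"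
  have t1: "0 < t1" "t1 < d" "t1 < e"
    using \<open>d > 0\<close> \<open>e > 0\<close> by (auto simp: t1_def)
  have in_closure: "?x t \<in> closure \<Omega>" if "0 \<le> t" "t \<le> t1" for t
    using inside[of t] that t1 \<open>x0 \<in> closure \<Omega>\<close> closure_subset by (cases "t = 0") auto
  have "continuous_on {0..t1} (\<lambda>t. s * u (?x t))"
    using in_closure
    by (intro continuous_intros continuous_on_compose2[OF u]) auto
  moreover have deriv: "((\<lambda>t. s * u (?x t)) has_real_derivative s * (Du (?x t) \<bullet> - ?n)) (at t)"
    if "0 < t" "t < t1" for t
  proof -
    have "((\<lambda>t. ?x t) has_derivative (\<lambda>t. - (t *\<^sub>R ?n))) (at t)"
      by (auto intro!: derivative_eq_intros)
    from has_derivative_compose[OF this u_deriv[OF inside]] that t1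
    have "((\<lambda>t. u (?x t)) has_derivative (\<lambda>h. Du (?x t) \<bullet> (- (h *\<^sub>R ?n)))) (at t)"
      by simp
    moreover have "(\<lambda>h. Du (?x t) \<bullet> (- (h *\<^sub>R ?n))) = (*) (Du (?x t) \<bullet> - ?n)"
      by (auto simp: fun_eq_iff)
    ultimately have "((\<lambda>t. u (?x t)) has_real_derivative Du (?x t) \<bullet> - ?n) (at t)"
      by (simp add: has_field_derivative_def)
    then show ?thesis
      by (rule DERIV_cmult)
  qed
  ultimately obtain l z where z: "0 < z" "z < t1" "((\<lambda>t. s * u (?x t)) has_real_derivative l) (at z)"
    and mvt: "s * u (?x t1) - s * u (?x 0) = (t1 - 0) * l"
    using MVT[OF t1(1)] real_differentiable_def by meson
  have l: "l = s * (Du (?x z) \<bullet> - ?n)"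
    using DERIV_unique[OF z(3) deriv[OF z(1,2)]] .
  have "dist (?x z) x0 < e"
    using \<open>norm ?n = 1\<close> z t1 by (simp add: dist_norm)
  then have "s * (Du (?x z) \<bullet> ?n) > 0"
    using e[of "?x z"] in_closure[of z] z by (auto simp: dist_real_def abs_less_iff)
  then have "s * u (?x t1) < s * u x0"
    using mvt l mult_pos_neg[OF t1(1), of "s * (Du (?x z) \<bullet> - ?n)"] by simp
  then show False
    using min[OF in_closure[of t1]] t1 by simp
qed

lemma absolutely_integrable_on_subset_compact:
  fixes f :: "'a::euclidean_space \<Rightarrow> real"
  assumes "compact K" "continuous_on K f" "S \<in> sets lebesgue" "S \<subseteq> K"
  shows "f absolutely_integrable_on S"
proof -
  have "f \<in> borel_measurable (lebesgue_on S)"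
    using continuous_imp_measurable_on_sets_lebesgue[OF continuous_on_subset[OF assms(2,4)] assms(3)] .
  moreover obtain B where "\<And>x. x \<in> K \<Longrightarrow> norm (f x) \<le> B"
    using compact_imp_bounded[OF compact_continuous_image[OF assms(2,1)]] by (auto simp: bounded_iff)
  moreover have "S \<in> lmeasurable"
    using assms bounded_set_imp_lmeasurable bounded_subset compact_imp_bounded by metis
  ultimately show ?thesis
    using assms(3,4) by (intro measurable_bounded_by_integrable_imp_absolutely_integrable[of f S "\<lambda>_. B"])
      (auto intro: integrable_on_const)
qed

lemma measure_lebesgue_open_pos:
  fixes S :: "'a::euclidean_space set"
  assumes "open S" "bounded S" "S \<noteq> {}"
  shows "measure lebesgue S > 0"
proof -
  obtain x r where "r > 0" "ball x r \<subseteq> S"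
    using assms(1,3) open_contains_ball by blast
  then have "measure lebesgue (ball x r) \<le> measure lebesgue S"
    using assms by (intro measure_mono_fmeasurable) (auto intro: bounded_set_imp_lmeasurable)
  moreover have "measure lebesgue (ball x r) > 0"
    using content_ball_pos[OF \<open>r > 0\<close>] by simp
  ultimately show ?thesis
    by linarith
qed

lemma integral_const_lmeasurable:
  "S \<in> lmeasurable \<Longrightarrow> integral S (\<lambda>x. c) = c * measure lebesgue S"
  using lmeasure_integral[of S] integral_mult_right[of S c "\<lambda>x. 1"] by simp

context
  fixes \<Omega> K :: "(real^'n::finite) set"
  assumes \<Omega>: "\<Omega> \<in> sets lebesgue" "measure lebesgue \<Omega> > 0" and K: "compact K" "\<Omega> \<subseteq> K"
begin

lemma lmeasurable_domain: "\<Omega> \<in> lmeasurable"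
  using \<Omega>(1) K bounded_set_imp_lmeasurable bounded_subset compact_imp_bounded by metis

lemma mean_eq_integral:
  assumes "continuous_on K f"
  shows "mean \<Omega> f = integral \<Omega> f / measure lebesgue \<Omega>"
  unfolding mean_def
  using set_lebesgue_integral_eq_integral(2)[OF absolutely_integrable_on_subset_compact[OF K(1) assms \<Omega>(1) K(2)]]
  by simp

lemma integrable_on_domain:
  fixes f :: "real^'n \<Rightarrow> real"
  assumes "continuous_on K f"
  shows "f integrable_on \<Omega>"
  using absolutely_integrable_on_subset_compact[OF K(1) assms \<Omega>(1) K(2)] absolutely_integrable_on_def by blast

lemma mean_le:
  assumes "continuous_on K f" "\<And>x. x \<in> \<Omega> \<Longrightarrow> f x \<le> c"
  shows "mean \<Omega> f \<le> c"
proof -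
  have "integral \<Omega> f \<le> integral \<Omega> (\<lambda>x. c)"
    using assms(2) by (intro integral_le integrable_on_domain[OF assms(1)] integrable_on_const lmeasurable_domain)
  then show ?thesis
    using \<Omega>(2) by (simp add: mean_eq_integral[OF assms(1)] integral_const_lmeasurable[OF lmeasurable_domain] divide_le_eq)
qed

lemma mean_ge:
  assumes "continuous_on K f" "\<And>x. x \<in> \<Omega> \<Longrightarrow> c \<le> f x"
  shows "c \<le> mean \<Omega> f"
proof -
  have "integral \<Omega> (\<lambda>x. c) \<le> integral \<Omega> f"
    using assms(2) by (intro integral_le integrable_on_domain[OF assms(1)] integrable_on_const lmeasurable_domain)
  then show ?thesis
    using \<Omega>(2) by (simp add: mean_eq_integral[OF assms(1)] integral_const_lmeasurable[OF lmeasurable_domain] le_divide_eq)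
qed

lemma one_le_mean_exp:
  assumes u: "continuous_on K u" and "(LINT x:\<Omega>|lebesgue. u x) = 0"
  shows "1 \<le> mean \<Omega> (\<lambda>x. exp (c * u x))"
proof -
  have "integral \<Omega> u = 0"
    using assms set_lebesgue_integral_eq_integral(2)[OF absolutely_integrable_on_subset_compact[OF K(1) u \<Omega>(1) K(2)]]
    by simp
  have "(\<lambda>x. c * u x) integrable_on \<Omega>"
    using integrable_on_cmult_left[OF integrable_on_domain[OF u], of c] by simp
  then have "integral \<Omega> (\<lambda>x. 1 + c * u x) = integral \<Omega> (\<lambda>x. 1) + integral \<Omega> (\<lambda>x. c * u x)"
    by (intro integral_add integrable_on_const lmeasurable_domain)
  also have "\<dots> = measure lebesgue \<Omega>"
    using \<open>integral \<Omega> u = 0\<close> integral_const_lmeasurable[OF lmeasurable_domain, of 1] by simp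
  finally have "integral \<Omega> (\<lambda>x. 1 + c * u x) = measure lebesgue \<Omega>" .
  moreover have "integral \<Omega> (\<lambda>x. 1 + c * u x) \<le> integral \<Omega> (\<lambda>x. exp (c * u x))"
    by (intro integral_le integrable_on_domain continuous_intros u) (simp_all add: exp_ge_add_one_self)
  ultimately show ?thesis
    using \<Omega>(2) mean_eq_integral[of "\<lambda>x. exp (c * u x)"] by (simp add: continuous_intros u le_divide_eq)
qed

end

section \<open>Integrals over thin layers\<close>

definition layer :: "('a \<Rightarrow> real) \<Rightarrow> real \<Rightarrow> 'a set" where
  "layer \<psi> d = {y. - d < \<psi> y \<and> \<psi> y \<le> 0}"

abbreviation slab :: "'m::finite \<Rightarrow> real \<Rightarrow> (real^'m) set" where
  "slab i d \<equiv> layer (\<lambda>z. z $ i) d"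

definition scale_coord :: "'m::finite \<Rightarrow> real \<Rightarrow> real^'m \<Rightarrow> real^'m" where
  "scale_coord i d z = (\<chi> j. if j = i then d * z $ i else z $ j)"

lemma scale_coord_nth [simp]: "scale_coord i d z $ j = (if j = i then d * z $ i else z $ j)"
  by (simp add: scale_coord_def)

lemma continuous_on_scale_coord [continuous_intros]:
  assumes "continuous_on S f" "continuous_on S g"
  shows "continuous_on S (\<lambda>x. scale_coord i (f x) (g x))"
  unfolding scale_coord_def
proof (intro continuous_on_vec_lambda)
  show "continuous_on S (\<lambda>x. if j = i then f x * g x $ i else g x $ j)" for j
    by (cases "j = i") (auto intro!: continuous_intros assms)
qed

lemma layer_in_sets_lebesgue:
  fixes \<psi> :: "'a::euclidean_space \<Rightarrow> real"
  assumes "continuous_on UNIV \<psi>"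
  shows "layer \<psi> d \<in> sets lebesgue"
proof -
  have "layer \<psi> d = {y. - d < \<psi> y} \<inter> {y. \<psi> y \<le> 0}"
    by (auto simp: layer_def)
  moreover have "open {y. - d < \<psi> y}" "closed {y. \<psi> y \<le> 0}"
    using assms open_Collect_less[of "\<lambda>_. - d" \<psi>] closed_Collect_le[of \<psi> "\<lambda>_. 0"]
    by (simp_all add: continuous_on_eq_continuous_at)
  ultimately show ?thesis
    by (simp add: borel_open borel_closed sets.Int)
qed

lemma slab_in_sets_lebesgue: "slab i d \<in> sets lebesgue"
  by (intro layer_in_sets_lebesgue continuous_intros)

lemma linear_scale_coord: "linear (scale_coord i d)"
  by (rule linearI) (simp_all add: vec_eq_iff algebra_simps)

lemma det_matrix_scale_coord: "det (matrix (scale_coord i d)) = d"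
proof -
  have "det (matrix (scale_coord i d)) = (\<Prod>j\<in>UNIV. matrix (scale_coord i d) $ j $ j)"
    by (rule det_diagonal) (simp add: matrix_def axis_def)
  also have "\<dots> = (\<Prod>j\<in>UNIV. if j = i then d else 1)"
    by (intro prod.cong) (auto simp: matrix_def axis_def)
  finally show ?thesis
    by simp
qed

lemma scale_coord_image_slab:
  assumes "d > 0"
  shows "scale_coord i d ` slab i 1 = slab i d"
proof
  show "scale_coord i d ` slab i 1 \<subseteq> slab i d"
  proof
    fix y assume "y \<in> scale_coord i d ` slab i 1"
    then obtain z where "y = scale_coord i d z" "- 1 < z $ i" "z $ i \<le> 0"
      by (auto simp: layer_def)
    moreover have "d * - 1 < d * z $ i"
      using assms \<open>- 1 < z $ i\<close> by (intro mult_strict_left_mono) auto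
    ultimately show "y \<in> slab i d"
      using assms by (simp add: layer_def mult_le_0_iff)
  qed
  show "slab i d \<subseteq> scale_coord i d ` slab i 1"
  proof
    fix z assume "z \<in> slab i d"
    then have "scale_coord i (1 / d) z \<in> slab i 1"
      using assms by (simp add: layer_def divide_le_0_iff less_divide_eq)
    moreover have "z = scale_coord i d (scale_coord i (1 / d) z)"
      using assms by (simp add: vec_eq_iff)
    ultimately show "z \<in> scale_coord i d ` slab i 1"
      by blast
  qed
qed

lemma absolutely_integrable_on_vanishing_outside_compact:
  fixes f :: "'a::euclidean_space \<Rightarrow> real"
  assumes "continuous_on UNIV f" "compact C" "\<And>z. z \<notin> C \<Longrightarrow> f z = 0" "S \<in> sets lebesgue"
  shows "f absolutely_integrable_on S"
proof -
  have "f absolutely_integrable_on (S \<inter> C)"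
    using assms by (intro absolutely_integrable_on_subset_compact[of C])
      (auto intro: continuous_on_subset sets.Int fmeasurableD lmeasurable_compact)
  then have "(\<lambda>x. if x \<in> S \<inter> C then f x else 0) absolutely_integrable_on UNIV"
    by (simp only: absolutely_integrable_restrict_UNIV)
  moreover have "(\<lambda>x. if x \<in> S \<inter> C then f x else 0) = (\<lambda>x. if x \<in> S then f x else 0)"
    using assms(3) by (auto simp: fun_eq_iff)
  ultimately show ?thesis
    by (simp only: absolutely_integrable_restrict_UNIV)
qed

lemma integral_change_of_variables_real:
  fixes K :: "real^'m::{finite,wellorder} \<Rightarrow> real"
  assumes "S \<in> sets lebesgue"
    and "\<And>x. x \<in> S \<Longrightarrow> (g has_derivative g' x) (at x within S)"
    and "inj_on g S" and "K absolutely_integrable_on (g ` S)"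
  shows "integral (g ` S) K = integral S (\<lambda>x. \<bar>det (matrix (g' x))\<bar> * K (g x))"
proof -
  let ?f = "\<lambda>z. K z *\<^sub>R (1 :: real^1)"
  have "?f absolutely_integrable_on (g ` S)"
    using absolutely_integrable_scaleR_right[OF assms(4)] .
  then have "(\<lambda>x. \<bar>det (matrix (g' x))\<bar> *\<^sub>R ?f (g x)) integrable_on S"
    and eq: "integral S (\<lambda>x. \<bar>det (matrix (g' x))\<bar> *\<^sub>R ?f (g x)) = integral (g ` S) ?f"
    and "?f integrable_on (g ` S)"
    using has_absolute_integral_change_of_variables[OF assms(1-3), of ?f "integral (g ` S) ?f"]
    by (auto simp: absolutely_integrable_on_def)
  then have "integral S (\<lambda>x. (\<bar>det (matrix (g' x))\<bar> *\<^sub>R ?f (g x)) $ 1) = integral (g ` S) (\<lambda>z. ?f z $ 1)"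
    by (simp only: integral_component_eq_cart eq)
  then show ?thesis
    by simp
qed

lemma integral_slab_eq_scaled:
  fixes K :: "real^'m::{finite,wellorder} \<Rightarrow> real"
  assumes "continuous_on UNIV K" "compact C" "\<And>z. z \<notin> C \<Longrightarrow> K z = 0" "d > 0"
  shows "integral (slab i d) K = d * integral (slab i 1) (\<lambda>z. K (scale_coord i d z))"
proof -
  have "inj (scale_coord i d)"
    using det_nz_iff_inj[OF linear_scale_coord, of i d] det_matrix_scale_coord[of i d] assms(4) by simp
  moreover have "K absolutely_integrable_on (scale_coord i d ` slab i 1)"
    using assms by (intro absolutely_integrable_on_vanishing_outside_compact)
      (auto simp: scale_coord_image_slab[OF assms(4)] slab_in_sets_lebesgue)
  ultimately have "integral (scale_coord i d ` slab i 1) K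
      = integral (slab i 1) (\<lambda>z. \<bar>det (matrix (scale_coord i d))\<bar> * K (scale_coord i d z))"
    by (intro integral_change_of_variables_real slab_in_sets_lebesgue linear_imp_has_derivative[OF linear_scale_coord])
      (auto simp: inj_on_def inj_def)
  then show ?thesis
    using assms(4) by (simp add: scale_coord_image_slab det_matrix_scale_coord)
qed

text \<open>On the unit slab, all rescalings of a function supported in a box are supported in one
  fixed box, which differs from the slab by a piece of a hyperplane.\<close>

lemma slab_integral_eq_box_integral:
  fixes K :: "real^'m::finite \<Rightarrow> real"
  assumes "continuous_on UNIV K" "\<And>z. z \<notin> cbox a b \<Longrightarrow> K z = 0"
  obtains a' b' where
    "\<And>d. ((\<lambda>z. K (scale_coord i d z)) has_integral integral (cbox a' b') (\<lambda>z. K (scale_coord i d z))) (slab i 1)"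
proof
  define a' where "a' = (\<chi> j. if j = i then -1 else a $ j)"
  define b' where "b' = (\<chi> j. if j = i then 0 else b $ j)"
  fix d
  let ?f = "\<lambda>z. K (scale_coord i d z)"
  have "continuous_on UNIV ?f"
    by (intro continuous_on_compose2[OF assms(1)] continuous_intros) auto
  then have box: "(?f has_integral integral (cbox a' b') ?f) (cbox a' b')"
    using continuous_on_subset integrable_continuous integrable_integral by blast
  have outside_box: "negligible {x \<in> slab i 1 - cbox a' b'. ?f x \<noteq> 0}"
  proof -
    have "x \<in> cbox a' b'" if x: "x \<in> slab i 1" "scale_coord i d x \<in> cbox a b" for x
      unfolding mem_box_cart
    proof
      fix j
      show "a' $ j \<le> x $ j \<and> x $ j \<le> b' $ j"
        using x(1) x(2)[unfolded mem_box_cart, rule_format, of j]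
        by (cases "j = i") (simp_all add: a'_def b'_def layer_def)
    qed
    then have "{x \<in> slab i 1 - cbox a' b'. ?f x \<noteq> 0} = {}"
      using assms(2) by blast
    then show ?thesis
      using negligible_empty by metis
  qed
  have "negligible {x::real^'m. x $ i = -1}"
    using negligible_standard_hyperplane[of "axis i (1::real)" "-1"] by (simp add: cart_eq_inner_axis)
  then have outside_slab: "negligible {x \<in> cbox a' b' - slab i 1. ?f x \<noteq> 0}"
  proof (rule negligible_subset, safe)
    fix x assume x: "x \<in> cbox a' b'" "x \<notin> slab i 1"
    have "a' $ i \<le> x $ i \<and> x $ i \<le> b' $ i"
      using x(1) unfolding mem_box_cart by blast
    then show "x $ i = -1"
      using x(2) by (auto simp: a'_def b'_def layer_def)
  qed
  show "(?f has_integral integral (cbox a' b') ?f) (slab i 1)"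
    using has_integral_spike_set_eq[OF outside_box outside_slab] box by blast
qed

text \<open>The limit is the integral of the trace of K on the hyperplane where the i-th coordinate
  vanishes, written as an integral over the slab of width one.\<close>

lemma tendsto_integral_slab_div:
  fixes K :: "real^'m::{finite,wellorder} \<Rightarrow> real"
  assumes K: "continuous_on UNIV K" "\<And>z. z \<notin> cbox a b \<Longrightarrow> K z = 0"
  shows "((\<lambda>d. integral (slab i d) K / d) \<longlongrightarrow> integral (slab i 1) (\<lambda>z. K (scale_coord i 0 z))) (at_right 0)"
proof -
  obtain a' b' where box:
    "\<And>d. ((\<lambda>z. K (scale_coord i d z)) has_integral integral (cbox a' b') (\<lambda>z. K (scale_coord i d z))) (slab i 1)"
    using slab_integral_eq_box_integral[OF K] by blast
  define I where "I d = integral (cbox a' b') (\<lambda>z. K (scale_coord i d z))" for d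
  have "continuous_on UNIV (\<lambda>p. K (scale_coord i (fst p) (snd p)))"
    by (intro continuous_on_compose2[OF K(1)] continuous_intros) auto
  then have "continuous_on UNIV I"
    unfolding I_def
    by (intro integral_continuous_on_param) (simp add: case_prod_beta continuous_on_subset[OF _ subset_UNIV])
  then have "(I \<longlongrightarrow> I 0) (at 0)"
    by (simp add: continuous_on_eq_continuous_at isCont_def)
  then have "(I \<longlongrightarrow> I 0) (at_right 0)"
    by (simp add: filterlim_at_split)
  moreover have "I d = integral (slab i d) K / d" if "d > 0" for d
    using integral_slab_eq_scaled[OF K(1) compact_cbox K(2) that] integral_unique[OF box[of d]] that
    by (simp add: I_def)
  then have "\<forall>\<^sub>F d in at_right 0. I d = integral (slab i d) K / d"
    by (intro eventually_at_rightI[of 0 1]) auto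
  ultimately have "((\<lambda>d. integral (slab i d) K / d) \<longlongrightarrow> I 0) (at_right 0)"
    by (rule Lim_transform_eventually)
  moreover have "I 0 = integral (slab i 1) (\<lambda>z. K (scale_coord i 0 z))"
    using integral_unique[OF box[of 0]] by (simp add: I_def)
  ultimately show ?thesis
    by simp
qed

lemma integral_slab_trace_nonneg:
  fixes K :: "real^'m::finite \<Rightarrow> real"
  assumes K: "continuous_on UNIV K" "\<And>z. z \<notin> cbox a b \<Longrightarrow> K z = 0"
    and nonneg: "\<And>z. z $ i = 0 \<Longrightarrow> K z \<ge> 0"
  shows "integral (slab i 1) (\<lambda>z. K (scale_coord i 0 z)) \<ge> 0"
proof -
  obtain a' b' where "((\<lambda>z. K (scale_coord i 0 z)) has_integral integral (cbox a' b') (\<lambda>z. K (scale_coord i 0 z))) (slab i 1)"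
    using slab_integral_eq_box_integral[OF K] by blast
  then show ?thesis
    using nonneg by (intro integral_nonneg) auto
qed

lemma integral_pos_of_ball:
  fixes f :: "'a::euclidean_space \<Rightarrow> real"
  assumes "f integrable_on S" "\<And>x. x \<in> S \<Longrightarrow> f x \<ge> 0" "continuous_on UNIV f"
    and "r > 0" "ball z r \<subseteq> S" "f z > 0"
  shows "integral S f > 0"
proof -
  have "isCont f z"
    using assms(3) by (simp add: continuous_on_eq_continuous_at)
  then obtain e where "e > 0" and e: "\<And>x. dist x z < e \<Longrightarrow> dist (f x) (f z) < f z / 2"
    using \<open>f z > 0\<close> unfolding continuous_at_eps_delta by (meson half_gt_zero)
  define r' where "r' = min r e"
  have "r' > 0" "ball z r' \<subseteq> S"
    using \<open>r > 0\<close> \<open>e > 0\<close> assms(5) by (auto simp: r'_def)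
  have lower: "f z / 2 \<le> f x" if "x \<in> ball z r'" for x
  proof -
    have "dist (f x) (f z) < f z / 2"
      using e[of x] that by (simp add: r'_def dist_commute)
    then show ?thesis
      unfolding dist_real_def abs_less_iff by linarith
  qed
  have "f absolutely_integrable_on ball z r'"
    by (rule absolutely_integrable_on_subset_compact[of "cball z r'"])
      (auto intro: continuous_on_subset[OF assms(3)])
  then have f_ball: "f integrable_on ball z r'"
    by (simp add: absolutely_integrable_on_def)
  have "0 < f z / 2 * measure lebesgue (ball z r')"
    using \<open>f z > 0\<close> content_ball_pos[OF \<open>r' > 0\<close>] by simp
  also have "\<dots> = integral (ball z r') (\<lambda>x. f z / 2)"
    by (simp only: integral_const_lmeasurable[OF lmeasurable_ball])
  also have "\<dots> \<le> integral (ball z r') f"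
    by (rule integral_le[OF integrable_on_const[OF lmeasurable_ball] f_ball lower])
  also have "\<dots> \<le> integral S f"
    using integral_subset_le[OF \<open>ball z r' \<subseteq> S\<close> f_ball assms(1)] assms(2) by blast
  finally show ?thesis .
qed

lemma integral_slab_trace_pos:
  fixes K :: "real^'m::finite \<Rightarrow> real"
  assumes K: "continuous_on UNIV K" "\<And>z. z \<notin> cbox a b \<Longrightarrow> K z = 0"
    and nonneg: "\<And>z. z $ i = 0 \<Longrightarrow> K z \<ge> 0" and "z0 $ i = 0" "K z0 > 0"
  shows "integral (slab i 1) (\<lambda>z. K (scale_coord i 0 z)) > 0"
proof -
  let ?f = "\<lambda>z. K (scale_coord i 0 z)"
  obtain a' b' where "(?f has_integral integral (cbox a' b') ?f) (slab i 1)"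
    using slab_integral_eq_box_integral[OF K] by blast
  then have "?f integrable_on slab i 1"
    by blast
  moreover have "0 \<le> ?f z" for z
    by (rule nonneg) simp
  moreover have "continuous_on UNIV ?f"
    by (intro continuous_on_compose2[OF K(1)] continuous_intros) auto
  moreover define z1 where "z1 = z0 - (1/2) *\<^sub>R axis i 1"
  have "ball z1 (1/2) \<subseteq> slab i 1"
  proof
    fix z assume "z \<in> ball z1 (1/2)"
    then have "\<bar>z $ i - z1 $ i\<bar> < 1/2"
      using component_le_norm_cart[of "z - z1" i] by (simp add: dist_norm norm_minus_commute)
    moreover have "z1 $ i = - 1/2"
      using \<open>z0 $ i = 0\<close> by (simp add: z1_def)
    ultimately show "z \<in> slab i 1"
      unfolding layer_def abs_less_iff by simp
  qed
  moreover have "scale_coord i 0 z1 = z0"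
    using \<open>z0 $ i = 0\<close> by (simp add: vec_eq_iff z1_def axis_def)
  ultimately show ?thesis
    using \<open>K z0 > 0\<close> by (intro integral_pos_of_ball[of ?f "slab i 1" "1/2" z1]) auto
qed

section \<open>Straightening the boundary\<close>

definition straighten :: "(real^'m::finite \<Rightarrow> real) \<Rightarrow> 'm \<Rightarrow> real^'m \<Rightarrow> real^'m" where
  "straighten \<psi> i y = (\<chi> j. if j = i then \<psi> y else y $ j)"

lemma straighten_nth [simp]: "straighten \<psi> i y $ j = (if j = i then \<psi> y else y $ j)"
  by (simp add: straighten_def)

lemma has_derivative_straighten:
  assumes "(\<psi> has_derivative \<psi>') (at y)"
  shows "(straighten \<psi> i has_derivative straighten \<psi>' i) (at y)"
proof -
  have eq: "straighten f i = (\<lambda>y. y + (f y - y $ i) *\<^sub>R axis i 1)" for f :: "real^'a \<Rightarrow> real"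
    by (auto simp: fun_eq_iff vec_eq_iff axis_def)
  have "((\<lambda>y. y $ i) has_derivative (\<lambda>h. h $ i)) (at y)"
    by (rule bounded_linear_imp_has_derivative) (rule bounded_linear_vec_nth)
  then show ?thesis
    unfolding eq by (auto intro!: derivative_eq_intros assms)
qed

lemma continuous_on_straighten:
  assumes "continuous_on S \<psi>"
  shows "continuous_on S (straighten \<psi> i)"
  unfolding straighten_def
proof (intro continuous_on_vec_lambda)
  show "continuous_on S (\<lambda>y. if j = i then \<psi> y else y $ j)" for j
    by (cases "j = i") (auto intro!: continuous_intros assms)
qed

lemma linear_straighten_inner: "linear (straighten (\<lambda>h. v \<bullet> h) i)"
  by (rule linearI) (simp_all add: vec_eq_iff inner_add_right)

lemma inj_straighten_inner:
  assumes "v $ i \<noteq> 0"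
  shows "inj (straighten (\<lambda>h. v \<bullet> h) i)"
proof -
  have "h = 0" if h: "straighten (\<lambda>h. v \<bullet> h) i h = 0" for h
  proof -
    have other: "h $ j = 0" if "j \<noteq> i" for j
      using arg_cong[OF h, of "\<lambda>w. w $ j"] that by simp
    have "v \<bullet> h = (\<Sum>j\<in>UNIV. if j = i then v $ i * h $ i else 0)"
      unfolding inner_vec_def by (intro sum.cong) (auto simp: other)
    moreover have "v \<bullet> h = 0"
      using arg_cong[OF h, of "\<lambda>w. w $ i"] by simp
    ultimately have "h $ i = 0"
      using assms by simp
    then show "h = 0"
      unfolding vec_eq_iff by (metis other zero_index)
  qed
  then show ?thesis
    by (simp add: linear_injective_0[OF linear_straighten_inner])
qed

lemma continuous_on_det:
  fixes M :: "'a::topological_space \<Rightarrow> real^'m::finite^'m"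
  assumes "\<And>a b. continuous_on S (\<lambda>y. M y $ a $ b)"
  shows "continuous_on S (\<lambda>y. det (M y))"
  unfolding det_def by (intro continuous_intros assms)

lemma continuous_on_det_straighten_inner:
  assumes "continuous_on S gr"
  shows "continuous_on S (\<lambda>y. det (matrix (straighten (\<lambda>h. gr y \<bullet> h) i)))"
proof (rule continuous_on_det)
  fix a b
  have "matrix (straighten (\<lambda>h. gr y \<bullet> h) i) $ a $ b = (if a = i then gr y $ b else axis b 1 $ a)" for y
    by (simp add: matrix_def inner_axis)
  moreover have "continuous_on S (\<lambda>y. if a = i then gr y $ b else axis b 1 $ a)"
    by (cases "a = i") (auto intro!: continuous_intros assms)
  ultimately show "continuous_on S (\<lambda>y. matrix (straighten (\<lambda>h. gr y \<bullet> h) i) $ a $ b)"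
    by simp
qed

text \<open>Two points with the same image differ only in the i-th coordinate, and on the segment
  between them psi is strictly monotone by the mean value theorem.\<close>

lemma inj_on_straighten:
  assumes deriv: "\<And>y. (\<psi> has_derivative (\<lambda>h. gr y \<bullet> h)) (at y)"
    and "convex C" and nonzero: "\<And>y. y \<in> C \<Longrightarrow> gr y $ i \<noteq> 0"
  shows "inj_on (straighten \<psi> i) C"
proof (rule inj_onI)
  fix y1 y2 assume "y1 \<in> C" "y2 \<in> C" and eq: "straighten \<psi> i y1 = straighten \<psi> i y2"
  define t where "t = y2 $ i - y1 $ i"
  have "y1 $ j = y2 $ j" if "j \<noteq> i" for j
    using arg_cong[OF eq, of "\<lambda>v. v $ j"] that by simp
  then have y2: "y2 = y1 + t *\<^sub>R axis i 1"
    by (auto simp: vec_eq_iff t_def axis_def)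
  have "\<psi> y1 = \<psi> y2"
    using arg_cong[OF eq, of "\<lambda>v. v $ i"] by simp
  define f where "f u = \<psi> (y1 + (u * t) *\<^sub>R axis i 1)" for u
  have f_deriv: "(f has_real_derivative t * gr (y1 + (u * t) *\<^sub>R axis i 1) $ i) (at u)" for u
  proof -
    let ?p = "y1 + (u * t) *\<^sub>R axis i 1"
    have "((\<lambda>u. y1 + (u * t) *\<^sub>R axis i 1) has_derivative (\<lambda>v. (v * t) *\<^sub>R axis i 1)) (at u)"
      by (auto intro!: derivative_eq_intros)
    from has_derivative_compose[OF this deriv[of ?p]]
    have "(f has_derivative (\<lambda>v. gr ?p \<bullet> ((v * t) *\<^sub>R axis i 1))) (at u)"
      unfolding f_def by simp
    moreover have "(\<lambda>v. gr ?p \<bullet> ((v * t) *\<^sub>R axis i 1)) = (*) (t * gr ?p $ i)"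
      by (auto simp: fun_eq_iff inner_axis)
    ultimately show ?thesis
      by (simp add: has_field_derivative_def)
  qed
  obtain z where "0 < z" "z < 1" and mvt: "f 1 - f 0 = (1 - 0) * (t * gr (y1 + (z * t) *\<^sub>R axis i 1) $ i)"
    using MVT2[of 0 1 f "\<lambda>u. t * gr (y1 + (u * t) *\<^sub>R axis i 1) $ i"] f_deriv by force
  have "y1 + (z * t) *\<^sub>R axis i 1 = (1 - z) *\<^sub>R y1 + z *\<^sub>R y2"
    by (simp add: y2 algebra_simps)
  then have "y1 + (z * t) *\<^sub>R axis i 1 \<in> C"
    using convexD[OF \<open>convex C\<close> \<open>y1 \<in> C\<close> \<open>y2 \<in> C\<close>, of "1 - z" z] \<open>0 < z\<close> \<open>z < 1\<close> by simp
  moreover have "f 1 = f 0"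
    using \<open>\<psi> y1 = \<psi> y2\<close> y2 by (simp add: f_def)
  ultimately have "t = 0"
    using mvt nonzero by auto
  then show "y1 = y2"
    using y2 by simp
qed

text \<open>A chart around c in which the level sets of psi become coordinate hyperplanes; the
  pushforward of F is the density of F in the new coordinates.\<close>

locale straightening_chart =
  fixes \<psi> :: "real^'m::{finite,wellorder} \<Rightarrow> real"
    and gr :: "real^'m::{finite,wellorder} \<Rightarrow> real^'m::{finite,wellorder}"
    and i :: "'m::{finite,wellorder}" and c :: "real^'m::{finite,wellorder}" and r :: real
  assumes has_derivative: "\<And>y. (\<psi> has_derivative (\<lambda>h. gr y \<bullet> h)) (at y)"
    and continuous_gr: "continuous_on UNIV gr"
    and gr_nonzero: "\<And>y. y \<in> cball c r \<Longrightarrow> gr y $ i \<noteq> 0"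
begin

definition jacobian where
  "jacobian y = \<bar>det (matrix (straighten (\<lambda>h. gr y \<bullet> h) i))\<bar>"

definition chart_inv where
  "chart_inv = inv_into (cball c r) (straighten \<psi> i)"

definition pushforward where
  "pushforward F z =
     (if z \<in> straighten \<psi> i ` ball c r then F (chart_inv z) / jacobian (chart_inv z) else 0)"

lemma continuous_\<psi>: "continuous_on UNIV \<psi>"
  using has_derivative has_derivative_continuous continuous_at_imp_continuous_on by blast

lemma continuous_straighten: "continuous_on UNIV (straighten \<psi> i)"
  by (rule continuous_on_straighten[OF continuous_\<psi>])

lemma jacobian_pos: "y \<in> cball c r \<Longrightarrow> jacobian y > 0"
  using det_nz_iff_inj[OF linear_straighten_inner, of "gr y" i] inj_straighten_inner[of "gr y" i] gr_nonzero[of y]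
  by (simp add: jacobian_def)

lemma continuous_jacobian: "continuous_on UNIV jacobian"
  unfolding jacobian_def by (intro continuous_intros continuous_on_det_straighten_inner continuous_gr)

lemma inj_on_straighten_cball: "inj_on (straighten \<psi> i) (cball c r)"
  by (rule inj_on_straighten[OF has_derivative convex_cball gr_nonzero])

lemma open_straighten_ball: "open (straighten \<psi> i ` ball c r)"
  by (rule invariance_of_domain[OF continuous_on_subset[OF continuous_straighten] open_ball
      inj_on_subset[OF inj_on_straighten_cball ball_subset_cball]]) simp

lemma chart_inv_straighten: "y \<in> cball c r \<Longrightarrow> chart_inv (straighten \<psi> i y) = y"
  unfolding chart_inv_def by (rule inv_into_f_f[OF inj_on_straighten_cball])

lemma chart_inv_in_ball:
  assumes "z \<in> straighten \<psi> i ` ball c r"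
  shows "chart_inv z \<in> ball c r" "straighten \<psi> i (chart_inv z) = z"
  using assms chart_inv_straighten by auto

lemma continuous_chart_inv: "continuous_on (straighten \<psi> i ` cball c r) chart_inv"
  unfolding chart_inv_def
  by (rule continuous_on_inv[OF continuous_on_subset[OF continuous_straighten] compact_cball])
    (use chart_inv_straighten[unfolded chart_inv_def] in auto)

lemma pushforward_straighten: "y \<in> ball c r \<Longrightarrow> pushforward F (straighten \<psi> i y) = F y / jacobian y"
  by (auto simp: pushforward_def chart_inv_straighten)

lemma straighten_image_layer:
  "straighten \<psi> i ` (ball c r \<inter> layer \<psi> d) = straighten \<psi> i ` ball c r \<inter> slab i d"
proof
  show "straighten \<psi> i ` (ball c r \<inter> layer \<psi> d) \<subseteq> straighten \<psi> i ` ball c r \<inter> slab i d"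
    by (auto simp: layer_def)
  show "straighten \<psi> i ` ball c r \<inter> slab i d \<subseteq> straighten \<psi> i ` (ball c r \<inter> layer \<psi> d)"
  proof
    fix z assume z: "z \<in> straighten \<psi> i ` ball c r \<inter> slab i d"
    then have "\<psi> (chart_inv z) = z $ i"
      using arg_cong[OF chart_inv_in_ball(2)[of z], of "\<lambda>v. v $ i"] by simp
    then have "chart_inv z \<in> ball c r \<inter> layer \<psi> d"
      using chart_inv_in_ball(1)[of z] z by (simp add: layer_def)
    moreover have "straighten \<psi> i (chart_inv z) = z"
      using chart_inv_in_ball(2)[of z] z by blast
    ultimately show "z \<in> straighten \<psi> i ` (ball c r \<inter> layer \<psi> d)"
      by (metis image_eqI)
  qed
qed

definition chart_flux where
  "chart_flux F = integral (slab i 1) (\<lambda>z. pushforward F (scale_coord i 0 z))"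

context
  fixes F :: "_ \<Rightarrow> real" and s :: real
  assumes continuous_F: "continuous_on UNIV F" and "s < r"
    and F_vanishes: "\<And>y. y \<notin> cball c s \<Longrightarrow> F y = 0"
begin

lemma cball_s_subset: "cball c s \<subseteq> ball c r"
  using \<open>s < r\<close> by (auto simp: subset_eq)

lemma pushforward_vanishes:
  assumes "z \<notin> straighten \<psi> i ` cball c s"
  shows "pushforward F z = 0"
proof (cases "z \<in> straighten \<psi> i ` ball c r")
  case True
  have "chart_inv z \<notin> cball c s"
  proof
    assume "chart_inv z \<in> cball c s"
    then have "straighten \<psi> i (chart_inv z) \<in> straighten \<psi> i ` cball c s"
      by (rule imageI)
    then show False
      using assms chart_inv_in_ball(2)[OF True] by simp
  qed
  then show ?thesis
    by (simp add: pushforward_def F_vanishes)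
qed (simp add: pushforward_def)

lemma compact_support_pushforward: "compact (straighten \<psi> i ` cball c s)"
  by (rule compact_continuous_image[OF continuous_on_subset[OF continuous_straighten] compact_cball]) simp

lemma continuous_pushforward: "continuous_on UNIV (pushforward F)"
proof -
  let ?O = "straighten \<psi> i ` ball c r" and ?C = "straighten \<psi> i ` cball c s"
  have inv: "continuous_on ?O chart_inv"
    by (rule continuous_on_subset[OF continuous_chart_inv]) auto
  have "continuous_on ?O (\<lambda>z. F (chart_inv z))"
    by (rule continuous_on_compose2[OF continuous_F inv]) auto
  moreover have "continuous_on ?O (\<lambda>z. jacobian (chart_inv z))"
    by (rule continuous_on_compose2[OF continuous_jacobian inv]) auto
  moreover have "jacobian (chart_inv z) \<noteq> 0" if "z \<in> ?O" for z
  proof -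
    have "chart_inv z \<in> cball c r"
      using chart_inv_in_ball(1)[OF that] by auto
    then show ?thesis
      using jacobian_pos by fastforce
  qed
  ultimately have "continuous_on ?O (\<lambda>z. F (chart_inv z) / jacobian (chart_inv z))"
    by (intro continuous_on_divide) auto
  moreover have "continuous_on ?O (pushforward F) = continuous_on ?O (\<lambda>z. F (chart_inv z) / jacobian (chart_inv z))"
    by (rule continuous_on_cong) (simp_all add: pushforward_def)
  ultimately have on_image: "continuous_on ?O (pushforward F)"
    by simp
  have "continuous_on (- ?C) (pushforward F) = continuous_on (- ?C) (\<lambda>z. 0 :: real)"
    by (rule continuous_on_cong) (simp_all add: pushforward_vanishes)
  then have off_support: "continuous_on (- ?C) (pushforward F)"
    by (simp add: continuous_on_const)
  have "open (- ?C)"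
    using compact_support_pushforward by (simp add: compact_imp_closed open_Compl)
  from continuous_on_open_Un[OF open_straighten_ball this on_image off_support]
  have "continuous_on (?O \<union> - ?C) (pushforward F)" .
  moreover have "?O \<union> - ?C = UNIV"
    using cball_s_subset by blast
  ultimately show ?thesis
    by simp
qed

lemma pushforward_vanishes_outside_box:
  obtains a b where "\<And>z. z \<notin> cbox a b \<Longrightarrow> pushforward F z = 0"
proof -
  obtain a where "straighten \<psi> i ` cball c s \<subseteq> cbox (-a) a"
    using bounded_subset_cbox_symmetric[OF compact_imp_bounded[OF compact_support_pushforward]] by blast
  then show ?thesis
    using that[of "-a" a] pushforward_vanishes by blast
qed

lemma integral_layer_eq_slab:
  assumes "d > 0"
  shows "integral (layer \<psi> d) F = integral (slab i d) (pushforward F)"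
proof -
  let ?S = "ball c r \<inter> layer \<psi> d"
  have S: "?S \<in> sets lebesgue"
    using layer_in_sets_lebesgue[OF continuous_\<psi>] by (simp add: borel_open sets.Int)
  have "integral (layer \<psi> d) F = integral (layer \<psi> d) (\<lambda>y. if y \<in> ball c r then F y else 0)"
  proof (intro integral_cong)
    show "F y = (if y \<in> ball c r then F y else 0)" for y
      using F_vanishes cball_s_subset by (cases "y \<in> ball c r") (auto simp del: mem_cball mem_ball)
  qed
  also have "\<dots> = integral ?S F"
    by (rule Henstock_Kurzweil_Integration.integral_restrict_Int)
  also have "\<dots> = integral ?S (\<lambda>y. jacobian y * pushforward F (straighten \<psi> i y))"
  proof (intro integral_cong)
    fix y assume "y \<in> ?S"
    then have "jacobian y > 0"
      using jacobian_pos by auto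
    then show "F y = jacobian y * pushforward F (straighten \<psi> i y)"
      using \<open>y \<in> ?S\<close> by (simp add: pushforward_straighten)
  qed
  also have "\<dots> = integral (straighten \<psi> i ` ?S) (pushforward F)"
    unfolding jacobian_def
  proof (rule integral_change_of_variables_real[symmetric, OF S])
    show "(straighten \<psi> i has_derivative straighten (\<lambda>h. gr y \<bullet> h) i) (at y within ?S)" for y
      using has_derivative_straighten[OF has_derivative] has_derivative_at_withinI by blast
    show "inj_on (straighten \<psi> i) ?S"
      using inj_on_subset[OF inj_on_straighten_cball] ball_subset_cball by blast
    have "straighten \<psi> i ` ?S \<in> sets lebesgue"
      unfolding straighten_image_layer using open_straighten_ball
      by (intro sets.Int slab_in_sets_lebesgue) (simp add: borel_open)
    then show "pushforward F absolutely_integrable_on (straighten \<psi> i ` ?S)"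
      by (intro absolutely_integrable_on_vanishing_outside_compact[OF continuous_pushforward
          compact_support_pushforward pushforward_vanishes])
  qed
  also have "\<dots> = integral (slab i d) (\<lambda>z. if z \<in> straighten \<psi> i ` ball c r then pushforward F z else 0)"
    unfolding straighten_image_layer Henstock_Kurzweil_Integration.integral_restrict_Int ..
  also have "\<dots> = integral (slab i d) (pushforward F)"
    by (intro integral_cong) (simp add: pushforward_def)
  finally show ?thesis .
qed

lemma tendsto_integral_layer_div:
  "((\<lambda>d. integral (layer \<psi> d) F / d) \<longlongrightarrow> chart_flux F) (at_right 0)"
proof -
  obtain a b where "\<And>z. z \<notin> cbox a b \<Longrightarrow> pushforward F z = 0"
    using pushforward_vanishes_outside_box by blast
  from tendsto_integral_slab_div[OF continuous_pushforward this, where i=i]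
  have "((\<lambda>d. integral (slab i d) (pushforward F) / d) \<longlongrightarrow> chart_flux F) (at_right 0)"
    by (simp add: chart_flux_def)
  moreover have "\<forall>\<^sub>F d in at_right 0. integral (slab i d) (pushforward F) / d = integral (layer \<psi> d) F / d"
    using integral_layer_eq_slab by (intro eventually_at_rightI[of 0 1]) auto
  ultimately show ?thesis
    by (rule Lim_transform_eventually)
qed

lemma pushforward_nonneg:
  assumes "\<And>y. \<psi> y = 0 \<Longrightarrow> F y \<ge> 0" "z $ i = 0"
  shows "pushforward F z \<ge> 0"
proof (cases "z \<in> straighten \<psi> i ` ball c r")
  case True
  then have "\<psi> (chart_inv z) = 0"
    using arg_cong[OF chart_inv_in_ball(2)[OF True], of "\<lambda>v. v $ i"] assms(2) by simp
  then show ?thesis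
    using True assms(1) jacobian_pos[of "chart_inv z"] chart_inv_in_ball(1)[OF True]
    by (simp add: pushforward_def)
qed (simp add: pushforward_def)

lemma chart_flux_nonneg:
  assumes "\<And>y. \<psi> y = 0 \<Longrightarrow> F y \<ge> 0"
  shows "chart_flux F \<ge> 0"
proof -
  obtain a b where "\<And>z. z \<notin> cbox a b \<Longrightarrow> pushforward F z = 0"
    using pushforward_vanishes_outside_box by blast
  then show ?thesis
    unfolding chart_flux_def
    by (rule integral_slab_trace_nonneg[OF continuous_pushforward _ pushforward_nonneg[OF assms]])
qed

lemma chart_flux_pos:
  assumes "\<And>y. \<psi> y = 0 \<Longrightarrow> F y \<ge> 0" "\<psi> y = 0" "F y > 0"
  shows "chart_flux F > 0"
proof -
  obtain a b where support: "\<And>z. z \<notin> cbox a b \<Longrightarrow> pushforward F z = 0"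
    using pushforward_vanishes_outside_box by blast
  have "y \<in> cball c s"
    using assms(3) F_vanishes by (metis less_irrefl)
  then have "y \<in> ball c r"
    using cball_s_subset by blast
  then have pos: "pushforward F (straighten \<psi> i y) > 0"
    using assms(3) jacobian_pos[of y] by (simp add: pushforward_straighten)
  have on_hyperplane: "straighten \<psi> i y $ i = 0"
    using assms(2) by simp
  show ?thesis
    unfolding chart_flux_def
    by (rule integral_slab_trace_pos[OF continuous_pushforward support pushforward_nonneg[OF assms(1)]
          on_hyperplane pos])
qed

end

end

lemma coordinate_nonzero_near:
  fixes gr :: "'a::metric_space \<Rightarrow> real^'m::finite"
  assumes "continuous_on UNIV gr" "gr x0 \<noteq> 0" "open W" "x0 \<in> W"
  shows "\<exists>r i. r > 0 \<and> cball x0 r \<subseteq> W \<and> (\<forall>y\<in>cball x0 r. gr y $ i \<noteq> 0)"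
proof -
  obtain i where i: "gr x0 $ i \<noteq> 0"
    using assms(2) by (auto simp: vec_eq_iff)
  have "isCont (\<lambda>y. gr y $ i) x0"
    using assms(1) by (simp add: continuous_on_eq_continuous_at continuous_intros)
  then obtain r1 where "r1 > 0" and r1: "\<And>y. dist y x0 < r1 \<Longrightarrow> dist (gr y $ i) (gr x0 $ i) < \<bar>gr x0 $ i\<bar>"
    unfolding continuous_at_eps_delta using i by (meson zero_less_abs_iff)
  obtain r2 where "r2 > 0" "ball x0 r2 \<subseteq> W"
    using assms(3,4) open_contains_ball by blast
  define r where "r = min r1 r2 / 2"
  have "r > 0" "r < r1" "r < r2"
    using \<open>r1 > 0\<close> \<open>r2 > 0\<close> by (auto simp: r_def)
  have "cball x0 r \<subseteq> W"
    using \<open>r < r2\<close> \<open>ball x0 r2 \<subseteq> W\<close> by (meson le_less_trans mem_ball mem_cball subset_eq)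
  moreover have "gr y $ i \<noteq> 0" if "y \<in> cball x0 r" for y
    using r1[of y] that \<open>r < r1\<close> by (auto simp: dist_commute dist_real_def)
  ultimately show ?thesis
    using \<open>r > 0\<close> by blast
qed

lemma level_set_chart_cover:
  fixes \<psi> :: "'a::metric_space \<Rightarrow> real" and gr :: "'a \<Rightarrow> real^'m::finite"
  assumes "continuous_on UNIV gr" "compact {y. \<psi> y = 0}" "\<And>y. \<psi> y = 0 \<Longrightarrow> gr y \<noteq> 0"
    and "open W" "{y. \<psi> y = 0} \<subseteq> W"
  obtains T rad idx where "finite T" "T \<subseteq> {y. \<psi> y = 0}" "{y. \<psi> y = 0} \<subseteq> (\<Union>x\<in>T. ball x (rad x))"
    "\<And>x. x \<in> T \<Longrightarrow> rad x > 0" "\<And>x. x \<in> T \<Longrightarrow> cball x (2 * rad x) \<subseteq> W"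
    "\<And>x y. x \<in> T \<Longrightarrow> y \<in> cball x (2 * rad x) \<Longrightarrow> gr y $ idx x \<noteq> 0"
proof -
  let ?\<Gamma> = "{y. \<psi> y = 0}"
  have "\<forall>x\<in>?\<Gamma>. \<exists>ir. snd ir > 0 \<and> cball x (snd ir) \<subseteq> W \<and> (\<forall>y\<in>cball x (snd ir). gr y $ fst ir \<noteq> 0)"
  proof
    fix x assume "x \<in> ?\<Gamma>"
    have "gr x \<noteq> 0"
      using \<open>x \<in> ?\<Gamma>\<close> assms(3) by blast
    have "x \<in> W"
      using \<open>x \<in> ?\<Gamma>\<close> assms(5) by blast
    then obtain r i where "r > 0 \<and> cball x r \<subseteq> W \<and> (\<forall>y\<in>cball x r. gr y $ i \<noteq> 0)"
      using coordinate_nonzero_near[OF assms(1) \<open>gr x \<noteq> 0\<close> assms(4)] by blast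
    then show "\<exists>ir. snd ir > 0 \<and> cball x (snd ir) \<subseteq> W \<and> (\<forall>y\<in>cball x (snd ir). gr y $ fst ir \<noteq> 0)"
      by (intro exI[of _ "(i, r)"]) simp
  qed
  from bchoice[OF this] obtain ir where ir0: "\<forall>x\<in>?\<Gamma>.
      snd (ir x) > 0 \<and> cball x (snd (ir x)) \<subseteq> W \<and> (\<forall>y\<in>cball x (snd (ir x)). gr y $ fst (ir x) \<noteq> 0)" ..
  have ir: "snd (ir x) > 0 \<and> cball x (snd (ir x)) \<subseteq> W \<and> (\<forall>y\<in>cball x (snd (ir x)). gr y $ fst (ir x) \<noteq> 0)"
    if "x \<in> ?\<Gamma>" for x
    using bspec[OF ir0 that] .
  define rad where "rad x = snd (ir x) / 2" for x
  have "?\<Gamma> \<subseteq> (\<Union>x\<in>?\<Gamma>. ball x (rad x))"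
  proof
    fix x assume "x \<in> ?\<Gamma>"
    then have "x \<in> ball x (rad x)"
      using ir[of x] by (simp add: rad_def)
    then show "x \<in> (\<Union>x\<in>?\<Gamma>. ball x (rad x))"
      using \<open>x \<in> ?\<Gamma>\<close> by blast
  qed
  then obtain T where T: "T \<subseteq> ?\<Gamma>" "finite T" "?\<Gamma> \<subseteq> (\<Union>x\<in>T. ball x (rad x))"
    using compactE_image[OF assms(2), of ?\<Gamma> "\<lambda>x. ball x (rad x)"] by blast
  show ?thesis
  proof (rule that[of T rad "\<lambda>x. fst (ir x)"])
    show "rad x > 0" "cball x (2 * rad x) \<subseteq> W" if "x \<in> T" for x
      using ir[of x] T(1) that by (auto simp: rad_def)
    show "gr y $ fst (ir x) \<noteq> 0" if "x \<in> T" "y \<in> cball x (2 * rad x)" for x y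
      using ir[of x] T(1) that by (auto simp: rad_def)
  qed (use T in auto)
qed

lemma compact_level_set:
  fixes \<psi> :: "'a::topological_space \<Rightarrow> real"
  assumes "continuous_on UNIV \<psi>" "compact {y. \<psi> y \<le> 0}"
  shows "compact {y. \<psi> y = 0}"
proof -
  have "{y. \<psi> y = 0} = {y. \<psi> y \<le> 0} \<inter> {y. \<psi> y = 0}"
    by auto
  then show ?thesis
    using compact_Int_closed[OF assms(2) closed_Collect_eq[OF assms(1) continuous_on_const, of 0]] by metis
qed

text \<open>The part of the sublevel set where f is at most c is compact and misses the level set, so psi
  is bounded away from zero on it.\<close>

lemma exists_layer_greater:
  fixes \<psi> f :: "'a::metric_space \<Rightarrow> real"
  assumes "continuous_on UNIV \<psi>" "compact {y. \<psi> y \<le> 0}" "continuous_on UNIV f"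
    and greater: "\<And>y. \<psi> y = 0 \<Longrightarrow> f y > c"
  obtains d0 where "d0 > 0" "\<And>y. y \<in> layer \<psi> d0 \<Longrightarrow> f y > c"
proof -
  define C where "C = {y. \<psi> y \<le> 0} \<inter> {y. f y \<le> c}"
  have "compact C"
    unfolding C_def by (intro compact_Int_closed assms(2) closed_Collect_le assms(3) continuous_on_const)
  have C_below: "\<psi> y < 0" if "y \<in> C" for y
    using greater[of y] that by (force simp: C_def)
  obtain d0 where "d0 > 0" and d0: "\<And>y. y \<in> C \<Longrightarrow> \<psi> y \<le> - d0"
  proof (cases "C = {}")
    case False
    obtain ym where "ym \<in> C" "\<And>y. y \<in> C \<Longrightarrow> \<psi> y \<le> \<psi> ym"
      using continuous_attains_sup[OF \<open>compact C\<close> False continuous_on_subset[OF assms(1)]] by blast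
    then show ?thesis
      using that[of "- \<psi> ym"] C_below by force
  qed (use that[of 1] in auto)
  have "f y > c" if "y \<in> layer \<psi> d0" for y
  proof (rule ccontr)
    assume "\<not> f y > c"
    then have "y \<in> C"
      using that by (auto simp: C_def layer_def)
    then show False
      using d0 that by (force simp: layer_def)
  qed
  then show ?thesis
    using that \<open>d0 > 0\<close> by blast
qed

lemma layer_partition_of_unity:
  fixes \<psi> :: "'a::euclidean_space \<Rightarrow> real"
  assumes "continuous_on UNIV \<psi>" "compact {y. \<psi> y \<le> 0}"
    and "finite T" "\<And>x. x \<in> T \<Longrightarrow> rad x > 0"
    and cover: "{y. \<psi> y = 0} \<subseteq> (\<Union>x\<in>T. ball x (rad x))" and "{y. \<psi> y = 0} \<noteq> {}"
  obtains \<rho> :: "'a \<Rightarrow> 'a \<Rightarrow> real" and d0 where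
    "\<And>x. continuous_on UNIV (\<rho> x)" "\<And>x y. \<rho> x y \<ge> 0"
    "\<And>x y. y \<notin> cball x (rad x) \<Longrightarrow> \<rho> x y = 0"
    "\<And>x y. y \<in> ball x (rad x) \<Longrightarrow> \<rho> x y > 0"
    "d0 > 0" "\<And>y. y \<in> layer \<psi> d0 \<Longrightarrow> (\<Sum>x\<in>T. \<rho> x y) = 1"
proof -
  let ?\<Gamma> = "{y. \<psi> y = 0}"
  define tent where "tent x y = max 0 (rad x - dist y x)" for x y
  define total where "total y = (\<Sum>x\<in>T. tent x y)" for y
  have tent: "continuous_on UNIV (tent x)" for x
    unfolding tent_def by (intro continuous_intros)
  then have "continuous_on UNIV total"
    unfolding total_def by (intro continuous_intros)
  have total_pos: "total y > 0" if y: "y \<in> ?\<Gamma>" for y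
  proof -
    obtain x where "x \<in> T" "y \<in> ball x (rad x)"
      using cover y by blast
    then show ?thesis
      unfolding total_def
      by (intro sum_pos2[OF assms(3) \<open>x \<in> T\<close>]) (auto simp: tent_def dist_commute)
  qed
  obtain y0 where "y0 \<in> ?\<Gamma>" and y0: "\<And>y. y \<in> ?\<Gamma> \<Longrightarrow> total y0 \<le> total y"
    using continuous_attains_inf[OF compact_level_set[OF assms(1,2)] assms(6)
        continuous_on_subset[OF \<open>continuous_on UNIV total\<close>]]
    by blast
  define \<eta> where "\<eta> = total y0 / 2"
  have "\<eta> > 0"
    using total_pos[OF \<open>y0 \<in> ?\<Gamma>\<close>] by (simp add: \<eta>_def)
  have "total y > \<eta>" if "\<psi> y = 0" for y
    using y0[of y] that \<open>\<eta> > 0\<close> by (simp add: \<eta>_def)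
  then obtain d0 where "d0 > 0" and d0: "\<And>y. y \<in> layer \<psi> d0 \<Longrightarrow> total y > \<eta>"
    using exists_layer_greater[OF assms(1,2) \<open>continuous_on UNIV total\<close>] by blast
  define \<rho> where "\<rho> x y = tent x y / max (total y) \<eta>" for x y
  show ?thesis
  proof (rule that[of \<rho> d0])
    show "continuous_on UNIV (\<rho> x)" for x
      unfolding \<rho>_def using \<open>\<eta> > 0\<close>
      by (intro continuous_intros tent \<open>continuous_on UNIV total\<close>) auto
    show "\<rho> x y \<ge> 0" "y \<notin> cball x (rad x) \<Longrightarrow> \<rho> x y = 0" "y \<in> ball x (rad x) \<Longrightarrow> \<rho> x y > 0" for x y
      using \<open>\<eta> > 0\<close> by (auto simp: \<rho>_def tent_def dist_commute)
    show "(\<Sum>x\<in>T. \<rho> x y) = 1" if "y \<in> layer \<psi> d0" for y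
      using d0[OF that] \<open>\<eta> > 0\<close> by (simp add: \<rho>_def total_def sum_divide_distrib[symmetric])
  qed fact
qed

lemma continuous_on_cutoff:
  fixes \<rho> H :: "'a::metric_space \<Rightarrow> real"
  assumes "continuous_on UNIV \<rho>" "continuous_on W H" "open W" "cball x s \<subseteq> W"
    and "\<And>y. y \<notin> cball x s \<Longrightarrow> \<rho> y = 0"
  shows "continuous_on UNIV (\<lambda>y. \<rho> y * H y)"
proof -
  have "continuous_on W (\<lambda>y. \<rho> y * H y)"
    by (intro continuous_intros continuous_on_subset[OF assms(1)] assms(2)) auto
  moreover have "continuous_on (- cball x s) (\<lambda>y. \<rho> y * H y) = continuous_on (- cball x s) (\<lambda>y. 0 :: real)"
    using assms(5) by (intro continuous_on_cong) auto
  then have "continuous_on (- cball x s) (\<lambda>y. \<rho> y * H y)"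
    by (simp add: continuous_on_const)
  ultimately have "continuous_on (W \<union> - cball x s) (\<lambda>y. \<rho> y * H y)"
    using continuous_on_open_Un[OF assms(3) open_Compl[OF closed_cball]] by blast
  moreover have "W \<union> - cball x s = UNIV"
    using assms(4) by blast
  ultimately show ?thesis
    by simp
qed

lemma tendsto_integral_layer_div_sum:
  fixes F :: "'i \<Rightarrow> 'a::euclidean_space \<Rightarrow> real"
  assumes "finite T" "d0 > 0"
    and "\<And>x. x \<in> T \<Longrightarrow> ((\<lambda>d. integral (layer \<psi> d) (F x) / d) \<longlongrightarrow> L x) (at_right 0)"
    and "\<And>x d. x \<in> T \<Longrightarrow> F x integrable_on layer \<psi> d"
    and "\<And>y. y \<in> layer \<psi> d0 \<Longrightarrow> (\<Sum>x\<in>T. F x y) = H y"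
  shows "((\<lambda>d. integral (layer \<psi> d) H / d) \<longlongrightarrow> (\<Sum>x\<in>T. L x)) (at_right 0)"
proof -
  have "((\<lambda>d. \<Sum>x\<in>T. integral (layer \<psi> d) (F x) / d) \<longlongrightarrow> (\<Sum>x\<in>T. L x)) (at_right 0)"
    using assms(3) by (rule tendsto_sum)
  moreover have "(\<Sum>x\<in>T. integral (layer \<psi> d) (F x) / d) = integral (layer \<psi> d) H / d"
    if "d \<le> d0" for d
  proof -
    have "(\<Sum>x\<in>T. integral (layer \<psi> d) (F x)) = integral (layer \<psi> d) (\<lambda>y. \<Sum>x\<in>T. F x y)"
      using assms(4) by (rule integral_sum[OF assms(1), symmetric])
    also have "\<dots> = integral (layer \<psi> d) H"
      using assms(5) that by (intro integral_cong) (auto simp: layer_def)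
    finally show ?thesis
      by (simp add: sum_divide_distrib[symmetric])
  qed
  then have "\<forall>\<^sub>F d in at_right 0. (\<Sum>x\<in>T. integral (layer \<psi> d) (F x) / d) = integral (layer \<psi> d) H / d"
    using assms(2) by (intro eventually_at_rightI[of 0 d0]) auto
  ultimately show ?thesis
    by (rule Lim_transform_eventually)
qed

text \<open>The limit is the integral of H against surface measure on the level set; each piece of a
  partition of unity is transported to a slab by a straightening chart.\<close>

theorem tendsto_integral_layer_div_pos_wo:
  fixes \<psi> :: "real^'m::{finite,wellorder} \<Rightarrow> real" and gr :: "real^'m::_ \<Rightarrow> real^'m::_"
  assumes deriv: "\<And>y. (\<psi> has_derivative (\<lambda>h. gr y \<bullet> h)) (at y)"
    and continuous_gr: "continuous_on UNIV gr" and "compact {y. \<psi> y \<le> 0}"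
    and regular: "\<And>y. \<psi> y = 0 \<Longrightarrow> gr y \<noteq> 0"
    and "open W" "{y. \<psi> y \<le> 0} \<subseteq> W" and H: "continuous_on W H"
    and H_nonneg: "\<And>y. \<psi> y = 0 \<Longrightarrow> H y \<ge> 0" and "\<psi> y0 = 0" "H y0 > 0"
  obtains L where "L > 0" "((\<lambda>d. integral (layer \<psi> d) H / d) \<longlongrightarrow> L) (at_right 0)"
proof -
  have continuous_\<psi>: "continuous_on UNIV \<psi>"
    using deriv has_derivative_continuous continuous_at_imp_continuous_on by blast
  let ?\<Gamma> = "{y. \<psi> y = 0}"
  have "compact ?\<Gamma>"
    by (rule compact_level_set[OF continuous_\<psi> \<open>compact {y. \<psi> y \<le> 0}\<close>])
  have "?\<Gamma> \<subseteq> W"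
    using \<open>{y. \<psi> y \<le> 0} \<subseteq> W\<close> by auto
  obtain T rad idx where T: "finite T" "T \<subseteq> ?\<Gamma>" "?\<Gamma> \<subseteq> (\<Union>x\<in>T. ball x (rad x))"
    and rad: "\<And>x. x \<in> T \<Longrightarrow> rad x > 0" "\<And>x. x \<in> T \<Longrightarrow> cball x (2 * rad x) \<subseteq> W"
    and idx: "\<And>x y. x \<in> T \<Longrightarrow> y \<in> cball x (2 * rad x) \<Longrightarrow> gr y $ idx x \<noteq> 0"
    by (rule level_set_chart_cover[OF continuous_gr \<open>compact ?\<Gamma>\<close> regular \<open>open W\<close> \<open>?\<Gamma> \<subseteq> W\<close>]) (assumption | rule that)+
  have "?\<Gamma> \<noteq> {}"
    using \<open>\<psi> y0 = 0\<close> by blast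
  obtain \<rho> :: "real^'m::_ \<Rightarrow> real^'m::_ \<Rightarrow> real" and d0 where \<rho>: "\<And>x. continuous_on UNIV (\<rho> x)" "\<And>x y. \<rho> x y \<ge> 0"
    "\<And>x y. y \<notin> cball x (rad x) \<Longrightarrow> \<rho> x y = 0" "\<And>x y. y \<in> ball x (rad x) \<Longrightarrow> \<rho> x y > 0"
    and "d0 > 0" and partition: "\<And>y. y \<in> layer \<psi> d0 \<Longrightarrow> (\<Sum>x\<in>T. \<rho> x y) = 1"
    by (rule layer_partition_of_unity[OF continuous_\<psi> \<open>compact {y. \<psi> y \<le> 0}\<close> T(1) rad(1) T(3)
          \<open>?\<Gamma> \<noteq> {}\<close>]) (assumption | rule that)+
  define F where "F x y = \<rho> x y * H y" for x y
  define L where "L x = straightening_chart.chart_flux \<psi> gr (idx x) x (2 * rad x) (F x)" for x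
  have chart: "straightening_chart \<psi> gr (idx x) x (2 * rad x)" if "x \<in> T" for x
    using deriv continuous_gr idx[OF that] by unfold_locales
  have F: "continuous_on UNIV (F x)" "rad x < 2 * rad x" "\<And>y. y \<notin> cball x (rad x) \<Longrightarrow> F x y = 0"
    if x: "x \<in> T" for x
  proof -
    have "cball x (rad x) \<subseteq> W"
      using subset_cball[of "rad x" "2 * rad x" x] rad[OF x] by simp
    then show "continuous_on UNIV (F x)"
      unfolding F_def by (rule continuous_on_cutoff[OF \<rho>(1) H \<open>open W\<close> _ \<rho>(3)])
    show "F x y = 0" if "y \<notin> cball x (rad x)" for y
      using \<rho>(3)[OF that] by (simp add: F_def)
    show "rad x < 2 * rad x"
      using rad(1)[OF x] by simp
  qed
  have F_nonneg: "F x y \<ge> 0" if "\<psi> y = 0" for x y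
    using \<rho>(2) H_nonneg[OF that] by (simp add: F_def)
  have "((\<lambda>d. integral (layer \<psi> d) (F x) / d) \<longlongrightarrow> L x) (at_right 0)" if "x \<in> T" for x
    unfolding L_def by (rule straightening_chart.tendsto_integral_layer_div[OF chart[OF that] F[OF that]])
  moreover have "F x integrable_on layer \<psi> d" if "x \<in> T" for x d
    using absolutely_integrable_on_vanishing_outside_compact[OF F(1)[OF that] compact_cball F(3)[OF that]
        layer_in_sets_lebesgue[OF continuous_\<psi>]]
    by (simp add: absolutely_integrable_on_def)
  moreover have "(\<Sum>x\<in>T. F x y) = H y" if "y \<in> layer \<psi> d0" for y
    using partition[OF that] by (simp add: F_def sum_distrib_right[symmetric])
  ultimately have "((\<lambda>d. integral (layer \<psi> d) H / d) \<longlongrightarrow> (\<Sum>x\<in>T. L x)) (at_right 0)"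
    by (rule tendsto_integral_layer_div_sum[OF T(1) \<open>d0 > 0\<close>])
  moreover have "(\<Sum>x\<in>T. L x) > 0"
  proof -
    obtain x where "x \<in> T" "y0 \<in> ball x (rad x)"
      using T(3) \<open>\<psi> y0 = 0\<close> by blast
    then have "F x y0 > 0"
      using \<rho>(4) \<open>H y0 > 0\<close> by (simp add: F_def)
    have "L x > 0"
      unfolding L_def
      by (rule straightening_chart.chart_flux_pos[OF chart[OF \<open>x \<in> T\<close>] F[OF \<open>x \<in> T\<close>] F_nonneg
            \<open>\<psi> y0 = 0\<close> \<open>F x y0 > 0\<close>])
    moreover have "L x \<ge> 0" if "x \<in> T" for x
      unfolding L_def by (rule straightening_chart.chart_flux_nonneg[OF chart[OF that] F[OF that] F_nonneg])
    ultimately show ?thesis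
      using sum_pos2[OF T(1) \<open>x \<in> T\<close>] by blast
  qed
  ultimately show ?thesis
    using that by blast
qed

section \<open>Positivity of the boundary integral\<close>

text \<open>The change of variables theorem of HOL-Analysis requires an index type of class wellorder;
  a copy of any finite index type can be well-ordered through its enumeration by to_nat.\<close>

typedef 'a wo = "UNIV :: 'a set"
  by simp

instance wo :: (finite) finite
proof
  have "(UNIV :: 'a wo set) = Abs_wo ` UNIV"
    by (metis Abs_wo_cases surj_def)
  then show "finite (UNIV :: 'a wo set)"
    by (metis finite finite_imageI)
qed

instantiation wo :: (finite) linorder
begin

definition less_eq_wo :: "'a wo \<Rightarrow> 'a wo \<Rightarrow> bool" where
  "less_eq_wo x y \<longleftrightarrow> to_nat (Rep_wo x) \<le> to_nat (Rep_wo y)"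

definition less_wo :: "'a wo \<Rightarrow> 'a wo \<Rightarrow> bool" where
  "less_wo x y \<longleftrightarrow> to_nat (Rep_wo x) < to_nat (Rep_wo y)"

instance
proof
  have inj: "to_nat (Rep_wo x) = to_nat (Rep_wo y) \<Longrightarrow> x = y" for x y :: "'a wo"
    by (metis Rep_wo_inject to_nat_split)
  fix x y z :: "'a wo"
  show "(x < y) = (x \<le> y \<and> \<not> y \<le> x)" "x \<le> x" "x \<le> y \<Longrightarrow> y \<le> z \<Longrightarrow> x \<le> z" "x \<le> y \<or> y \<le> x"
    by (auto simp: less_eq_wo_def less_wo_def)
  show "x \<le> y \<Longrightarrow> y \<le> x \<Longrightarrow> x = y"
    using inj by (simp add: less_eq_wo_def)
qed

end

instance wo :: (finite) wellorder
proof
  fix P :: "'a wo \<Rightarrow> bool" and a :: "'a wo"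
  assume step: "\<And>x. (\<And>y. y < x \<Longrightarrow> P y) \<Longrightarrow> P x"
  show "P a"
    by (induction a rule: measure_induct_rule[where f="\<lambda>x. to_nat (Rep_wo x)"])
      (use step in \<open>simp add: less_wo_def\<close>)
qed

definition to_wo :: "real^'n::finite \<Rightarrow> real^'n wo" where
  "to_wo x = (\<chi> j. x $ Rep_wo j)"

definition of_wo :: "real^'n::finite wo \<Rightarrow> real^'n" where
  "of_wo y = (\<chi> i. y $ Abs_wo i)"

lemma to_wo_nth [simp]: "to_wo x $ j = x $ Rep_wo j"
  by (simp add: to_wo_def)

lemma of_wo_nth [simp]: "of_wo y $ i = y $ Abs_wo i"
  by (simp add: of_wo_def)

lemma to_wo_of_wo [simp]: "to_wo (of_wo y) = y"
  by (simp add: vec_eq_iff Rep_wo_inverse)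

lemma of_wo_to_wo [simp]: "of_wo (to_wo x) = x"
  by (simp add: vec_eq_iff Abs_wo_inverse)

lemma linear_to_wo: "linear to_wo" and linear_of_wo: "linear of_wo"
  by (auto intro!: linearI simp: vec_eq_iff)

lemma inner_of_wo: "a \<bullet> of_wo h = to_wo a \<bullet> h"
proof -
  have "bij_betw Rep_wo UNIV UNIV"
    by (metis Rep_wo_inject UNIV_I bij_betw_def inj_onI surj_def Abs_wo_inverse)
  then have "(\<Sum>j\<in>UNIV. a $ Rep_wo j * h $ j) = (\<Sum>i\<in>UNIV. a $ i * h $ Abs_wo i)"
    using sum.reindex_bij_betw[of Rep_wo UNIV UNIV "\<lambda>i. a $ i * h $ Abs_wo i"] by (simp add: Rep_wo_inverse)
  then show ?thesis
    by (simp add: inner_vec_def)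
qed

lemma to_wo_image_cbox: "to_wo ` cbox u v = cbox (to_wo u) (to_wo v)"
proof
  show "to_wo ` cbox u v \<subseteq> cbox (to_wo u) (to_wo v)"
    by (auto simp: mem_box_cart)
  show "cbox (to_wo u) (to_wo v) \<subseteq> to_wo ` cbox u v"
  proof
    fix y assume y: "y \<in> cbox (to_wo u) (to_wo v)"
    have "u $ i \<le> of_wo y $ i \<and> of_wo y $ i \<le> v $ i" for i
      using y[unfolded mem_box_cart, rule_format, of "Abs_wo i"] by (simp add: Abs_wo_inverse)
    then have "of_wo y \<in> cbox u v"
      by (simp add: mem_box_cart)
    then show "y \<in> to_wo ` cbox u v"
      by (metis to_wo_of_wo image_eqI)
  qed
qed

lemma of_wo_image_cbox: "of_wo ` cbox u v = cbox (of_wo u) (of_wo v)"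
proof -
  have "of_wo ` cbox u v = of_wo ` to_wo ` cbox (of_wo u) (of_wo v)"
    by (simp add: to_wo_image_cbox)
  also have "\<dots> = cbox (of_wo u) (of_wo v)"
    by (simp add: image_image)
  finally show ?thesis .
qed

lemma content_cbox_of_wo:
  "Henstock_Kurzweil_Integration.content (cbox (of_wo u) (of_wo v)) = Henstock_Kurzweil_Integration.content (cbox u v)"
proof (cases "cbox u v = {}")
  case False
  then have "cbox (of_wo u) (of_wo v) \<noteq> {}"
    by (metis image_is_empty of_wo_image_cbox)
  have "bij_betw Abs_wo UNIV UNIV"
    by (metis Abs_wo_inject UNIV_I bij_betw_def inj_onI surj_def Rep_wo_inverse)
  then have "(\<Prod>i\<in>UNIV. v $ Abs_wo i - u $ Abs_wo i) = (\<Prod>j\<in>UNIV. v $ j - u $ j)"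
    by (rule prod.reindex_bij_betw)
  then show ?thesis
    using content_cbox_cart[OF False] content_cbox_cart[OF \<open>cbox (of_wo u) (of_wo v) \<noteq> {}\<close>] by simp
next
  case True
  then have "cbox (of_wo u) (of_wo v) = {}"
    by (metis image_is_empty of_wo_image_cbox)
  then show ?thesis
    using True by simp
qed

lemma integral_comp_of_wo:
  fixes f :: "real^'n::finite \<Rightarrow> real"
  assumes "f integrable_on S" "bounded S"
  shows "integral (to_wo ` S) (\<lambda>y. f (of_wo y)) = integral S f"
proof -
  obtain a where a: "S \<subseteq> cbox (-a) a"
    using bounded_subset_cbox_symmetric[OF assms(2)] by blast
  define g where "g x = (if x \<in> S then f x else 0)" for x
  have "(g has_integral integral S f) (cbox (-a) a)"
    unfolding g_def using has_integral_restrict[OF a] integrable_integral[OF assms(1)] by blast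
  moreover have "continuous (at x) of_wo" for x
    using linear_of_wo linear_continuous_at linear_conv_bounded_linear by blast
  ultimately have "((\<lambda>y. g (of_wo y)) has_integral (1 / 1) *\<^sub>R integral S f) (to_wo ` cbox (-a) a)"
    by (intro has_integral_twiddle[where g=of_wo and h=to_wo])
      (auto simp: to_wo_image_cbox of_wo_image_cbox content_cbox_of_wo)
  moreover have "(\<lambda>y. g (of_wo y)) = (\<lambda>y. if y \<in> to_wo ` S then f (of_wo y) else 0)"
    by (force simp: fun_eq_iff g_def image_iff)
  moreover have "to_wo ` S \<subseteq> to_wo ` cbox (-a) a"
    using a by blast
  ultimately have "((\<lambda>y. f (of_wo y)) has_integral integral S f) (to_wo ` S)"
    using has_integral_restrict by auto
  then show ?thesis
    by (rule integral_unique)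
qed

lemma integral_layer_comp_of_wo:
  fixes \<phi> G :: "real^'n::finite \<Rightarrow> real"
  assumes "G integrable_on layer \<phi> d" "bounded (layer \<phi> d)"
  shows "integral (layer (\<lambda>y. \<phi> (of_wo y)) d) (\<lambda>y. G (of_wo y)) = integral (layer \<phi> d) G"
proof -
  have "to_wo ` layer \<phi> d = layer (\<lambda>y. \<phi> (of_wo y)) d"
    by (force simp: layer_def image_iff intro: exI[of _ "of_wo y" for y])
  then show ?thesis
    using integral_comp_of_wo[OF assms] by simp
qed

theorem tendsto_integral_layer_div_pos:
  fixes \<psi> :: "real^'n::finite \<Rightarrow> real" and gr :: "real^'n \<Rightarrow> real^'n"
  assumes deriv: "\<And>y. (\<psi> has_derivative (\<lambda>h. gr y \<bullet> h)) (at y)"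
    and continuous_gr: "continuous_on UNIV gr" and compact: "compact {y. \<psi> y \<le> 0}"
    and regular: "\<And>y. \<psi> y = 0 \<Longrightarrow> gr y \<noteq> 0"
    and "open W" and sublevel: "{y. \<psi> y \<le> 0} \<subseteq> W" and H: "continuous_on W H"
    and H_nonneg: "\<And>y. \<psi> y = 0 \<Longrightarrow> H y \<ge> 0" and "\<psi> y0 = 0" "H y0 > 0"
  obtains L where "L > 0" "((\<lambda>d. integral (layer \<psi> d) H / d) \<longlongrightarrow> L) (at_right 0)"
proof -
  have lin: "bounded_linear (of_wo :: real^'n wo \<Rightarrow> real^'n)" "bounded_linear (to_wo :: real^'n \<Rightarrow> real^'n wo)"
    using linear_of_wo linear_to_wo linear_conv_bounded_linear by auto
  have of_wo: "continuous_on A (of_wo :: real^'n wo \<Rightarrow> real^'n)" for A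
    using linear_continuous_on[OF lin(1)] .
  have to_wo: "continuous_on A (to_wo :: real^'n \<Rightarrow> real^'n wo)" for A
    using linear_continuous_on[OF lin(2)] .
  have sublevel_wo: "{y. \<psi> (of_wo y) \<le> 0} = to_wo ` {y. \<psi> y \<le> 0}"
    by (force simp: image_iff intro: exI[of _ "of_wo y" for y])
  obtain L where "L > 0"
    and L: "((\<lambda>d. integral (layer (\<lambda>y. \<psi> (of_wo y)) d) (\<lambda>y. H (of_wo y)) / d) \<longlongrightarrow> L) (at_right 0)"
  proof (rule tendsto_integral_layer_div_pos_wo[where gr="\<lambda>y. to_wo (gr (of_wo y))" and W="of_wo -` W"])
    show "((\<lambda>y. \<psi> (of_wo y)) has_derivative (\<lambda>h. to_wo (gr (of_wo y)) \<bullet> h)) (at y)" for y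
      using has_derivative_compose[OF bounded_linear_imp_has_derivative[OF lin(1)] deriv]
      by (simp add: inner_of_wo)
    have "continuous_on UNIV (\<lambda>y. gr (of_wo y))"
      by (rule continuous_on_compose2[OF continuous_gr of_wo]) auto
    then show "continuous_on UNIV (\<lambda>y. to_wo (gr (of_wo y)))"
      by (rule continuous_on_compose2[OF to_wo]) auto
    show "compact {y. \<psi> (of_wo y) \<le> 0}"
      unfolding sublevel_wo by (rule compact_continuous_image[OF to_wo compact])
    show "to_wo (gr (of_wo y)) \<noteq> 0" if "\<psi> (of_wo y) = 0" for y
      using regular[OF that] by (metis linear_0[OF linear_of_wo] of_wo_to_wo)
    show "open (of_wo -` W)"
      using open_vimage[OF \<open>open W\<close> of_wo] .
    show "{y. \<psi> (of_wo y) \<le> 0} \<subseteq> of_wo -` W"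
      using sublevel by auto
    show "continuous_on (of_wo -` W) (\<lambda>y. H (of_wo y))"
      by (rule continuous_on_compose2[OF H of_wo]) auto
    show "H (of_wo y) \<ge> 0" if "\<psi> (of_wo y) = 0" for y
      using H_nonneg[OF that] .
    show "\<psi> (of_wo (to_wo y0)) = 0" "H (of_wo (to_wo y0)) > 0"
      using \<open>\<psi> y0 = 0\<close> \<open>H y0 > 0\<close> by simp_all
  qed
  have "integral (layer (\<lambda>y. \<psi> (of_wo y)) d) (\<lambda>y. H (of_wo y)) = integral (layer \<psi> d) H" for d
  proof (rule integral_layer_comp_of_wo)
    have "layer \<psi> d \<subseteq> {y. \<psi> y \<le> 0}"
      by (auto simp: layer_def)
    moreover have "continuous_on UNIV \<psi>"
      using deriv has_derivative_continuous continuous_at_imp_continuous_on by blast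
    ultimately have "H absolutely_integrable_on layer \<psi> d"
      by (intro absolutely_integrable_on_subset_compact[OF compact continuous_on_subset[OF H sublevel]]
          layer_in_sets_lebesgue)
    then show "H integrable_on layer \<psi> d"
      by (simp add: absolutely_integrable_on_def)
    show "bounded (layer \<psi> d)"
      using \<open>layer \<psi> d \<subseteq> {y. \<psi> y \<le> 0}\<close> compact bounded_subset compact_imp_bounded by blast
  qed
  then show ?thesis
    using that \<open>L > 0\<close> L by simp
qed

theorem boundary_integral_pos:
  fixes \<phi> g :: "real^'n::finite \<Rightarrow> real"
  assumes \<Omega>: "smooth_bounded_domain \<Omega> \<phi>" and "open U" "closure \<Omega> \<subseteq> U" "smooth_on g U"
    and g_pos: "\<forall>x\<in>closure \<Omega>. g x > 0"
  shows "boundary_integral \<phi> g > 0"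
proof -
  note \<phi> = smooth_bounded_domainD[OF \<Omega>]
  have closure: "closure \<Omega> = {x. \<phi> x \<le> 0}"
    by (rule smooth_bounded_domain_closure[OF \<Omega>])
  have compact: "compact {x. \<phi> x \<le> 0}"
    using \<phi>(3) closure by (metis compact_closure)
  define G where "G x = g x * norm (grad \<phi> x)" for x
  have G: "continuous_on U G"
    unfolding G_def
    by (intro continuous_intros smooth_onD(1)[OF \<open>smooth_on g U\<close>] continuous_on_subset[OF \<phi>(6)]) auto
  obtain x0 where "x0 \<in> frontier \<Omega>"
    using \<phi>(3,4) frontier_eq_empty not_bounded_UNIV by blast
  then have "\<phi> x0 = 0"
    using smooth_bounded_domain_frontier[OF \<Omega>] by blast
  have "G x \<ge> 0" if "\<phi> x = 0" for x
    using g_pos that closure by (simp add: G_def less_imp_le)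
  moreover have "G x0 > 0"
    using g_pos closure \<open>\<phi> x0 = 0\<close> \<phi>(8)[OF \<open>\<phi> x0 = 0\<close>] by (simp add: G_def)
  ultimately obtain L where "L > 0" and L: "((\<lambda>d. integral (layer \<phi> d) G / d) \<longlongrightarrow> L) (at_right 0)"
    using tendsto_integral_layer_div_pos[OF \<phi>(7) \<phi>(6) compact \<phi>(8) \<open>open U\<close> _ G, of x0]
      \<open>closure \<Omega> \<subseteq> U\<close> closure \<open>\<phi> x0 = 0\<close> by blast
  have "integral (layer \<phi> d) G / d
      = 1 / d * (LINT x:{x. - d < \<phi> x \<and> \<phi> x \<le> 0}|lebesgue. g x * norm (grad \<phi> x))" for d
  proof -
    have "layer \<phi> d \<subseteq> closure \<Omega>"
      by (auto simp: closure layer_def)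
    then have "G absolutely_integrable_on layer \<phi> d"
      using compact_closure \<phi>(3) continuous_on_subset[OF G \<open>closure \<Omega> \<subseteq> U\<close>]
      by (intro absolutely_integrable_on_subset_compact[of "closure \<Omega>"] layer_in_sets_lebesgue \<phi>(5)) auto
    from set_lebesgue_integral_eq_integral(2)[OF this] show ?thesis
      by (simp add: layer_def G_def)
  qed
  with L have "((\<lambda>d. 1 / d * (LINT x:{x. - d < \<phi> x \<and> \<phi> x \<le> 0}|lebesgue. g x * norm (grad \<phi> x)))
      \<longlongrightarrow> L) (at_right 0)"
    by simp
  then have "boundary_integral \<phi> g = L"
    unfolding boundary_integral_def by (rule tendsto_Lim[OF trivial_limit_at_right_real])
  then show ?thesis
    using \<open>L > 0\<close> by simp
qed

section \<open>Bounds on the means of a solution\<close>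

lemma mean_bounds_at_min:
  fixes A B p q a b m :: real
  assumes "A > 0" "B > 0" "p > 0" "q > 0" "1 \<le> a" "1 \<le> b" "m \<le> 0" "b \<le> exp (- q * m)"
    and "B * exp (- q * m) / b \<le> A * exp (p * m) / a"
  shows "a \<le> A / B" "b \<le> (A / B) powr (q / p)"
proof -
  have "B \<le> B * exp (- q * m) / b"
    using assms(2,6,8) by (simp add: le_divide_eq)
  also have "\<dots> \<le> A * exp (p * m) / a"
    by (fact assms(9))
  finally have key: "B * a \<le> A * exp (p * m)"
    using assms(5) by (simp add: le_divide_eq)
  have "exp (p * m) \<le> 1"
    using assms(3,7) by (simp add: mult_nonneg_nonpos)
  then have "B * a \<le> A"
    using key assms(1) by (smt (verit) mult_left_le)
  then show "a \<le> A / B"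
    using assms(2) by (simp add: field_simps)
  have "B \<le> A * exp (p * m)"
    using key assms(2,5) by (smt (verit) mult_le_cancel_left1)
  then have "exp (- p * m) \<le> A / B"
    using assms(1,2) by (simp add: field_simps exp_minus)
  then have "exp (- p * m) powr (q / p) \<le> (A / B) powr (q / p)"
    using assms(3,4) by (intro powr_mono2) auto
  moreover have "exp (- p * m) powr (q / p) = exp (- q * m)"
    using assms(3) by (simp add: powr_def)
  ultimately show "b \<le> (A / B) powr (q / p)"
    using assms(8) by linarith
qed

locale neumann_solution =
  fixes \<Omega> :: "(real^'n::finite) set" and \<phi> g u :: "real^'n \<Rightarrow> real" and U :: "(real^'n) set"
    and A B p q \<epsilon> :: real
  assumes domain: "smooth_bounded_domain \<Omega> \<phi>"
    and U: "open U" "closure \<Omega> \<subseteq> U" "smooth_on g U" and g_pos: "\<forall>x\<in>closure \<Omega>. g x > 0"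
    and pos: "A > 0" "B > 0" "p > 0" "q > 0" "\<epsilon> > 0"
    and solves: "solves_N \<Omega> \<phi> g A B p q \<epsilon> u"
begin

lemma continuous_u: "continuous_on (closure \<Omega>) u"
  and zero_mean: "(LINT x:\<Omega>|lebesgue. u x) = 0"
  using solves by (simp_all add: solves_N_def)

lemma measure_pos: "measure lebesgue \<Omega> > 0"
  using smooth_bounded_domainD(2-4)[OF domain] by (rule measure_lebesgue_open_pos)

lemma domain_measurable: "\<Omega> \<in> sets lebesgue"
  using smooth_bounded_domainD(2)[OF domain] by (simp add: borel_open)

lemma compact_closure_domain: "compact (closure \<Omega>)"
  using smooth_bounded_domainD(3)[OF domain] by (simp add: compact_closure)

lemmas mean_le_closure = mean_le[OF domain_measurable measure_pos compact_closure_domain closure_subset]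
  and mean_ge_closure = mean_ge[OF domain_measurable measure_pos compact_closure_domain closure_subset]
  and one_le_mean_exp_u =
    one_le_mean_exp[OF domain_measurable measure_pos compact_closure_domain closure_subset continuous_u zero_mean]

text \<open>At a minimum point of s u, the Neumann flux (whose sign is that of A - B, as the boundary
  integral of g is positive) excludes the boundary, and the equation gives the sign of its
  right-hand side.\<close>

lemma sign_at_extremum:
  assumes "s * (A - B) > 0" "x0 \<in> closure \<Omega>" and min: "\<And>y. y \<in> closure \<Omega> \<Longrightarrow> s * u x0 \<le> s * u y"
  shows "s * (A * exp (p * u x0) / mean \<Omega> (\<lambda>y. exp (p * u y))
    - B * exp (- q * u x0) / mean \<Omega> (\<lambda>y. exp (- q * u y))) \<ge> 0"
proof -
  obtain Du where Du: "continuous_on (closure \<Omega>) Du" "\<forall>x\<in>\<Omega>. (u has_derivative (\<lambda>h. Du x \<bullet> h)) (at x)"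
    and neumann: "\<forall>x\<in>frontier \<Omega>. \<epsilon>\<^sup>2 * (Du x \<bullet> outward_normal \<phi> x) =
      measure lebesgue \<Omega> * (A - B) / boundary_integral \<phi> g"
    using solves by (auto simp: solves_N_def)
  have "x0 \<in> \<Omega>"
  proof (rule ccontr)
    assume "x0 \<notin> \<Omega>"
    then have "x0 \<in> frontier \<Omega>"
      using assms(2) smooth_bounded_domainD(2)[OF domain] by (simp add: frontier_def interior_open)
    then have "s * (Du x0 \<bullet> outward_normal \<phi> x0) \<le> 0"
      using Du min by (intro normal_derivative_sign_at_boundary_min[OF domain _ continuous_u]) auto
    then have "\<epsilon>\<^sup>2 * (s * (Du x0 \<bullet> outward_normal \<phi> x0)) \<le> 0"
      by (simp add: mult_nonneg_nonpos)
    then have "s * (\<epsilon>\<^sup>2 * (Du x0 \<bullet> outward_normal \<phi> x0)) \<le> 0"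
      by (simp add: mult.left_commute)
    moreover have "s * (\<epsilon>\<^sup>2 * (Du x0 \<bullet> outward_normal \<phi> x0))
        = measure lebesgue \<Omega> * (s * (A - B)) / boundary_integral \<phi> g"
      using neumann \<open>x0 \<in> frontier \<Omega>\<close> by (simp add: ac_simps)
    moreover have "measure lebesgue \<Omega> * (s * (A - B)) / boundary_integral \<phi> g > 0"
      by (rule divide_pos_pos[OF mult_pos_pos[OF measure_pos assms(1)] boundary_integral_pos[OF domain U g_pos]])
    ultimately show False
      by linarith
  qed
  have "g differentiable (at x0)"
    using smooth_onD(2)[OF U(3)] U(2) closure_subset \<open>x0 \<in> \<Omega>\<close> by blast
  moreover have "smooth_on u \<Omega>"
    using solves by (simp add: solves_N_def)
  moreover have "s * u x0 \<le> s * u y" if "y \<in> \<Omega>" for y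
    using min closure_subset that by blast
  ultimately have "s * divergence (\<lambda>y. g y *\<^sub>R grad u y) x0 \<ge> 0"
    using g_pos assms(2)
    by (intro divergence_sign_at_interior_min[OF smooth_bounded_domainD(2)[OF domain] _ \<open>x0 \<in> \<Omega>\<close>])
      (auto simp: less_imp_le)
  then have "\<epsilon>\<^sup>2 * (s * divergence (\<lambda>y. g y *\<^sub>R grad u y) x0) \<ge> 0"
    by simp
  then have "s * (\<epsilon>\<^sup>2 * divergence (\<lambda>y. g y *\<^sub>R grad u y) x0) \<ge> 0"
    by (simp add: mult.left_commute)
  then show ?thesis
    using solves \<open>x0 \<in> \<Omega>\<close> by (simp add: solves_N_def)
qed

lemma mean_bounds_if_greater:
  assumes "A > B"
  shows "mean \<Omega> (\<lambda>x. exp (p * u x)) \<le> A / B"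
    "mean \<Omega> (\<lambda>x. exp (- q * u x)) \<le> (A / B) powr (q / p)"
proof -
  obtain xm where "xm \<in> closure \<Omega>" and min: "\<And>y. y \<in> closure \<Omega> \<Longrightarrow> u xm \<le> u y"
    using continuous_attains_inf[OF compact_closure_domain _ continuous_u] smooth_bounded_domainD(4)[OF domain]
    by auto
  have "u xm \<le> 0"
    using mean_ge_closure[OF continuous_u, of "u xm"] min closure_subset zero_mean by (auto simp: mean_def)
  moreover have "mean \<Omega> (\<lambda>x. exp (- q * u x)) \<le> exp (- q * u xm)"
    using min closure_subset pos(4) by (intro mean_le_closure) (auto intro!: continuous_intros continuous_u)
  moreover have "1 * (A * exp (p * u xm) / mean \<Omega> (\<lambda>y. exp (p * u y))
      - B * exp (- q * u xm) / mean \<Omega> (\<lambda>y. exp (- q * u y))) \<ge> 0"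
    using assms min by (intro sign_at_extremum \<open>xm \<in> closure \<Omega>\<close>) auto
  ultimately show "mean \<Omega> (\<lambda>x. exp (p * u x)) \<le> A / B"
    "mean \<Omega> (\<lambda>x. exp (- q * u x)) \<le> (A / B) powr (q / p)"
    using mean_bounds_at_min[OF pos(1-4) one_le_mean_exp_u[of p] one_le_mean_exp_u[of "- q"], of "u xm"] by auto
qed

lemma mean_bounds_if_less:
  assumes "A < B"
  shows "mean \<Omega> (\<lambda>x. exp (- q * u x)) \<le> B / A"
    "mean \<Omega> (\<lambda>x. exp (p * u x)) \<le> (B / A) powr (p / q)"
proof -
  obtain xM where "xM \<in> closure \<Omega>" and max: "\<And>y. y \<in> closure \<Omega> \<Longrightarrow> u y \<le> u xM"
    using continuous_attains_sup[OF compact_closure_domain _ continuous_u] smooth_bounded_domainD(4)[OF domain]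
    by auto
  have "0 \<le> u xM"
    using mean_le_closure[OF continuous_u, of "u xM"] max closure_subset zero_mean by (auto simp: mean_def)
  moreover have "mean \<Omega> (\<lambda>x. exp (p * u x)) \<le> exp (- p * - u xM)"
    using max closure_subset pos(3) by (intro mean_le_closure) (auto intro!: continuous_intros continuous_u)
  moreover have "(- 1) * (A * exp (p * u xM) / mean \<Omega> (\<lambda>y. exp (p * u y))
      - B * exp (- q * u xM) / mean \<Omega> (\<lambda>y. exp (- q * u y))) \<ge> 0"
    using assms max by (intro sign_at_extremum \<open>xM \<in> closure \<Omega>\<close>) auto
  ultimately show "mean \<Omega> (\<lambda>x. exp (- q * u x)) \<le> B / A"
    "mean \<Omega> (\<lambda>x. exp (p * u x)) \<le> (B / A) powr (p / q)"
    using mean_bounds_at_min[OF pos(2,1,4,3) one_le_mean_exp_u[of "- q"] one_le_mean_exp_u[of p], of "- u xM"] by auto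
qed

end

theorem corollary3p3:
  fixes \<Omega> :: "(real^'n::finite) set" and \<phi> g u :: "real^'n \<Rightarrow> real"
    and A B p q \<epsilon> :: real
  assumes "CARD('n) \<ge> 2"
    and "smooth_bounded_domain \<Omega> \<phi>"
    and "\<exists>U. open U \<and> closure \<Omega> \<subseteq> U \<and> smooth_on g U"
    and "\<forall>x\<in>closure \<Omega>. g x > 0"
    and "A > 0" "B > 0" "p > 0" "q > 0"
    and "(A - B) * (p - q) \<ge> 0" "A \<noteq> B"
    and "\<epsilon> > 0"
    and "solves_N \<Omega> \<phi> g A B p q \<epsilon> u"
  shows "1 \<le> mean \<Omega> (\<lambda>x. exp (p * u x)) \<and>
         mean \<Omega> (\<lambda>x. exp (p * u x)) \<le> max (A / B) ((B / A) powr (p / q)) \<and>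
         1 \<le> mean \<Omega> (\<lambda>x. exp (- q * u x)) \<and>
         mean \<Omega> (\<lambda>x. exp (- q * u x)) \<le> max (B / A) ((A / B) powr (q / p))"
proof -
  obtain U where "open U" "closure \<Omega> \<subseteq> U" "smooth_on g U"
    using assms(3) by blast
  then interpret neumann_solution \<Omega> \<phi> g u U A B p q \<epsilon>
    using assms by unfold_locales auto
  consider "A > B" | "A < B"
    using \<open>A \<noteq> B\<close> by linarith
  then show ?thesis
  proof cases
    case 1
    then show ?thesis
      using mean_bounds_if_greater one_le_mean_exp_u[of p] one_le_mean_exp_u[of "- q"] by (auto simp: le_max_iff_disj)
  next
    case 2
    then show ?thesis
      using mean_bounds_if_less one_le_mean_exp_u[of p] one_le_mean_exp_u[of "- q"] by (auto simp: le_max_iff_disj)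
  qed
qed

end
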